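(* Let $R$ be a finitely generated $\mathbb{C}$-algebra which is an integral domain. Then $R$ is rigid if and only if $R[X,Y]/(XY)$ (with $X,Y$ indeterminates over $R$) is rigid.
   Context: A derivation of a $\mathbb{C}$-algebra $A$ is a $\mathbb{C}$-linear map $D:A\to A$ satisfying the Leibniz rule; it is locally nilpotent (an LND) if for every $a\in A$ there is $n$ with $D^n(a)=0$. A ring is rigid if its only locally nilpotent derivation is the zero derivation. *)

theory Defs
  imports "HOL-Algebra.Algebra" Complex_Main
begin

definition complex_ring :: "complex ring" where
  "complex_ring = \<lparr>carrier = UNIV, monoid.mult = (*), one = 1, ring.zero = 0, ring.add = (+)\<rparr>"

definition C_algebra :: "('a, 'b) ring_scheme \<Rightarrow> (complex \<Rightarrow> 'a) \<Rightarrow> bool" where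
  "C_algebra R \<phi> \<longleftrightarrow> cring R \<and> \<phi> \<in> ring_hom complex_ring R"

definition fin_gen_C_algebra :: "('a, 'b) ring_scheme \<Rightarrow> (complex \<Rightarrow> 'a) \<Rightarrow> bool" where
  "fin_gen_C_algebra R \<phi> \<longleftrightarrow>
     (\<exists>S. finite S \<and> S \<subseteq> carrier R \<and> carrier R = generate_ring R (range \<phi> \<union> S))"

definition C_derivation :: "('a, 'b) ring_scheme \<Rightarrow> (complex \<Rightarrow> 'a) \<Rightarrow> ('a \<Rightarrow> 'a) \<Rightarrow> bool" where
  "C_derivation R \<phi> D \<longleftrightarrow>
     D \<in> carrier R \<rightarrow> carrier R \<and>
     (\<forall>a\<in>carrier R. \<forall>b\<in>carrier R. D (a \<oplus>\<^bsub>R\<^esub> b) = D a \<oplus>\<^bsub>R\<^esub> D b) \<and>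
     (\<forall>c. \<forall>a\<in>carrier R. D (\<phi> c \<otimes>\<^bsub>R\<^esub> a) = \<phi> c \<otimes>\<^bsub>R\<^esub> D a) \<and>
     (\<forall>a\<in>carrier R. \<forall>b\<in>carrier R.
        D (a \<otimes>\<^bsub>R\<^esub> b) = (a \<otimes>\<^bsub>R\<^esub> D b) \<oplus>\<^bsub>R\<^esub> (D a \<otimes>\<^bsub>R\<^esub> b))"

definition LND :: "('a, 'b) ring_scheme \<Rightarrow> (complex \<Rightarrow> 'a) \<Rightarrow> ('a \<Rightarrow> 'a) \<Rightarrow> bool" where
  "LND R \<phi> D \<longleftrightarrow> C_derivation R \<phi> D \<and> (\<forall>a\<in>carrier R. \<exists>n. (D ^^ n) a = \<zero>\<^bsub>R\<^esub>)"

definition rigid :: "('a, 'b) ring_scheme \<Rightarrow> (complex \<Rightarrow> 'a) \<Rightarrow> bool" where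
  "rigid R \<phi> \<longleftrightarrow> (\<forall>D. LND R \<phi> D \<longrightarrow> (\<forall>a\<in>carrier R. D a = \<zero>\<^bsub>R\<^esub>))"

text \<open>R[X,Y] realised as (R[X])[Y] (HOL-Algebra univariate polynomials), the ideal (XY), and R[X,Y]/(XY).\<close>
definition polyXY :: "('a, 'b) ring_scheme \<Rightarrow> (nat \<Rightarrow> 'a, nat \<Rightarrow> nat \<Rightarrow> 'a) up_ring" where
  "polyXY R = UP (UP R)"

definition varX :: "('a, 'b) ring_scheme \<Rightarrow> nat \<Rightarrow> nat \<Rightarrow> 'a" where
  "varX R = monom (UP (UP R)) (monom (UP R) \<one>\<^bsub>R\<^esub> 1) 0"

definition varY :: "('a, 'b) ring_scheme \<Rightarrow> nat \<Rightarrow> nat \<Rightarrow> 'a" where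
  "varY R = monom (UP (UP R)) \<one>\<^bsub>UP R\<^esub> 1"

definition constXY :: "('a, 'b) ring_scheme \<Rightarrow> 'a \<Rightarrow> nat \<Rightarrow> nat \<Rightarrow> 'a" where
  "constXY R a = monom (UP (UP R)) (monom (UP R) a 0) 0"

definition XY_ideal :: "('a, 'b) ring_scheme \<Rightarrow> (nat \<Rightarrow> nat \<Rightarrow> 'a) set" where
  "XY_ideal R = genideal (polyXY R) {varX R \<otimes>\<^bsub>polyXY R\<^esub> varY R}"

definition XY_quot :: "('a, 'b) ring_scheme \<Rightarrow> (nat \<Rightarrow> nat \<Rightarrow> 'a) set ring" where
  "XY_quot R = polyXY R Quot XY_ideal R"

definition XY_quot_hom :: "('a, 'b) ring_scheme \<Rightarrow> (complex \<Rightarrow> 'a) \<Rightarrow> complex \<Rightarrow> (nat \<Rightarrow> nat \<Rightarrow> 'a) set" where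
  "XY_quot_hom R \<phi> c = a_r_coset (polyXY R) (XY_ideal R) (constXY R (\<phi> c))"

end

theory Submission
  imports Defs
begin

text \<open>
  We show that \<open>R\<close> is
  rigid iff \<open>B\<close> is rigid.

  \<^item> \<open>B\<close> rigid \<open>\<Longrightarrow>\<close> \<open>R\<close> rigid: an LND of \<open>R\<close> extends coefficientwise to an LND of \<open>R[X,Y]\<close> killing
    \<open>X\<close> and \<open>Y\<close>; it preserves \<open>(XY)\<close> and so induces an LND of \<open>B\<close>, which must vanish.
  \<^item> \<open>R\<close> rigid \<open>\<Longrightarrow>\<close> \<open>B\<close> rigid: let \<open>D\<close> be an LND of \<open>B\<close> and \<open>\<pi>\<close> the projection \<open>B \<rightarrow> R[T]\<close>
    setting \<open>Y = 0\<close>.  Since \<open>XY = 0\<close> and \<open>X\<close>, \<open>Y\<close> map to nonzerodivisors under the two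
    projections, \<open>D\<close> preserves \<open>ker \<pi> = (Y)\<close> and \<open>D X \<in> (X)\<close>.  Hence \<open>D\<close> descends to an LND
    \<open>E\<close> of \<open>R[T]\<close> with \<open>T | E T\<close>, so \<open>E T = 0\<close> (in a characteristic-zero domain an element
    dividing its own derivative has derivative zero).  Over a rigid \<open>R\<close> such an \<open>E\<close> has
    values divisible by every power of \<open>T\<close>, so \<open>E = 0\<close>.  Thus both projections kill
    \<open>D C\<close>, and the joint kernel of the projections is \<open>(XY)\<close>, so \<open>D = 0\<close>.
\<close>

section \<open>Derivations of commutative rings\<close>

text \<open>An additive map satisfying the Leibniz rule.  Linearity over \<open>\<complex>\<close> is kept separate,
  since most of the algebra below does not need it.\<close>
locale ring_derivation = cring R for R (structure) +
  fixes D
  assumes D_closed: "a \<in> carrier R \<Longrightarrow> D a \<in> carrier R"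
    and D_add: "\<lbrakk>a \<in> carrier R; b \<in> carrier R\<rbrakk> \<Longrightarrow> D (a \<oplus> b) = D a \<oplus> D b"
    and D_mult: "\<lbrakk>a \<in> carrier R; b \<in> carrier R\<rbrakk> \<Longrightarrow> D (a \<otimes> b) = a \<otimes> D b \<oplus> D a \<otimes> b"
begin

lemma D_zero [simp]: "D \<zero> = \<zero>"
proof -
  have "D \<zero> \<oplus> D \<zero> = D \<zero> \<oplus> \<zero>" using D_add[of \<zero> \<zero>] D_closed[of \<zero>] by simp
  thus ?thesis using D_closed[of \<zero>] by (meson add.l_cancel zero_closed)
qed

lemma D_one [simp]: "D \<one> = \<zero>"
proof -
  have "D \<one> \<oplus> D \<one> = D \<one> \<oplus> \<zero>" using D_mult[of \<one> \<one>] D_closed[of \<one>] by simp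
  thus ?thesis using D_closed[of \<one>] by (meson add.l_cancel zero_closed one_closed)
qed

lemma D_minus:
  assumes "a \<in> carrier R" "b \<in> carrier R"
  shows "D (a \<ominus> b) = D a \<ominus> D b"
proof -
  have "D b \<oplus> D (\<ominus> b) = \<zero>" using D_add[of b "\<ominus> b"] assms by (simp add: r_neg)
  hence "D (\<ominus> b) = \<ominus> D b"
    using assms D_closed by (metis a_inv_closed add.inv_closed add.m_comm minus_equality)
  thus ?thesis using assms by (simp add: a_minus_def D_add)
qed

lemma D_pow_closed: "a \<in> carrier R \<Longrightarrow> (D ^^ n) a \<in> carrier R"
  by (induction n) (auto simp: D_closed)

lemma D_pow_vanishes_mono: "(D ^^ n) a = \<zero> \<Longrightarrow> n \<le> m \<Longrightarrow> (D ^^ m) a = \<zero>"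
proof -
  assume "(D ^^ n) a = \<zero>" "n \<le> m"
  moreover obtain k where "m = k + n" using \<open>n \<le> m\<close> by (metis add.commute le_add_diff_inverse)
  moreover have "(D ^^ k) \<zero> = \<zero>" by (induction k) auto
  ultimately show ?thesis by (simp add: funpow_add)
qed

lemma D_add_pow: "a \<in> carrier R \<Longrightarrow> D (add_pow R (k::nat) a) = add_pow R k (D a)"
  by (induction k) (auto simp: D_add D_closed)

lemma D_finsum:
  "f \<in> UNIV \<rightarrow> carrier R \<Longrightarrow> D (\<Oplus>i\<in>{..(n::nat)}. f i) = (\<Oplus>i\<in>{..n}. D (f i))"
proof (induction n)
  case 0 thus ?case using D_closed by (subst (1 2) finsum_0) auto
next
  case (Suc n)
  have "(\<lambda>i. D (f i)) \<in> UNIV \<rightarrow> carrier R" using Suc.prems D_closed by auto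
  thus ?case using Suc by (simp add: finsum_Suc D_add Pi_def finsum_closed)
qed

lemma general_leibniz:
  assumes a: "a \<in> carrier R" and b: "b \<in> carrier R"
  shows "(D ^^ n) (a \<otimes> b) = (\<Oplus>i\<in>{..n}. add_pow R (n choose i) ((D ^^ i) a \<otimes> (D ^^ (n - i)) b))"
proof (induction n)
  case 0
  show ?case using a b by (subst finsum_0) auto
next
  case (Suc n)
  define g where "g i = (D ^^ i) a \<otimes> (D ^^ (Suc n - i)) b" for i
  have gc: "g i \<in> carrier R" for i using a b by (simp add: g_def D_pow_closed)
  define P1 where "P1 = (\<Oplus>i\<in>{..n}. add_pow R (n choose i) (g i))"
  define P2 where "P2 = (\<Oplus>i\<in>{..n}. add_pow R (n choose i) (g (Suc i)))"
  define Q where "Q = (\<Oplus>i\<in>{..n}. add_pow R (n choose (Suc i)) (g (Suc i)))"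
  have cP2: "P2 \<in> carrier R" and cQ: "Q \<in> carrier R"
    unfolding P2_def Q_def using gc by (auto intro!: finsum_closed)
  have derivative_of_term: "D (add_pow R (n choose i) ((D ^^ i) a \<otimes> (D ^^ (n - i)) b))
      = add_pow R (n choose i) (g i) \<oplus> add_pow R (n choose i) (g (Suc i))" if "i \<le> n" for i
  proof -
    have "D ((D ^^ (n - i)) b) = (D ^^ (Suc n - i)) b" using that by (simp add: Suc_diff_le)
    thus ?thesis using a b gc
      by (simp add: D_add_pow D_mult D_pow_closed D_closed g_def add.nat_pow_distrib)
  qed
  have "(D ^^ Suc n) (a \<otimes> b)
      = (\<Oplus>i\<in>{..n}. D (add_pow R (n choose i) ((D ^^ i) a \<otimes> (D ^^ (n - i)) b)))"
    using Suc a b by (simp add: D_finsum D_pow_closed)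
  also have "\<dots> = (\<Oplus>i\<in>{..n}. add_pow R (n choose i) (g i) \<oplus> add_pow R (n choose i) (g (Suc i)))"
    by (rule finsum_cong) (use gc derivative_of_term in auto)
  also have "\<dots> = P1 \<oplus> P2" unfolding P1_def P2_def
    by (rule finsum_addf) (use gc in auto)
  finally have L: "(D ^^ Suc n) (a \<otimes> b) = P1 \<oplus> P2" .
  have "P1 = (\<Oplus>i\<in>{..Suc n}. add_pow R (n choose i) (g i))"
    unfolding P1_def using gc by (subst finsum_Suc) (auto simp: binomial_eq_0)
  also have "\<dots> = g 0 \<oplus> Q"
    unfolding Q_def using gc by (subst finsum_Suc2) (auto intro: a_comm finsum_closed)
  finally have P1e: "P1 = g 0 \<oplus> Q" .
  have "(\<Oplus>i\<in>{..Suc n}. add_pow R (Suc n choose i) (g i))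
      = g 0 \<oplus> (\<Oplus>i\<in>{..n}. add_pow R (Suc n choose Suc i) (g (Suc i)))"
    using gc by (subst finsum_Suc2) (auto intro: a_comm finsum_closed)
  also have "(\<Oplus>i\<in>{..n}. add_pow R (Suc n choose Suc i) (g (Suc i)))
     = (\<Oplus>i\<in>{..n}. add_pow R (n choose i) (g (Suc i)) \<oplus> add_pow R (n choose Suc i) (g (Suc i)))"
    by (rule finsum_cong) (use gc in \<open>auto simp: add.nat_pow_mult\<close>)
  also have "\<dots> = P2 \<oplus> Q" unfolding P2_def Q_def
    by (rule finsum_addf) (use gc in auto)
  finally have "(\<Oplus>i\<in>{..Suc n}. add_pow R (Suc n choose i) (g i)) = P1 \<oplus> P2"
    using P1e cP2 cQ gc by (simp add: a_ac)
  thus ?case using L by (simp add: g_def)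
qed

end

section \<open>Locally nilpotent derivations of domains of characteristic zero\<close>

locale lnd_char0_domain = ring_derivation + domain R +
  assumes char0: "\<And>k a. 0 < k \<Longrightarrow> a \<in> carrier R \<Longrightarrow> a \<noteq> \<zero> \<Longrightarrow> add_pow R (k::nat) a \<noteq> \<zero>"
    and locally_nilpotent: "\<And>a. a \<in> carrier R \<Longrightarrow> \<exists>n. (D ^^ n) a = \<zero>"
begin

lemma exists_degree:
  assumes a: "a \<in> carrier R" "a \<noteq> \<zero>"
  shows "\<exists>i. (D ^^ i) a \<noteq> \<zero> \<and> (D ^^ Suc i) a = \<zero>"
proof -
  obtain n where n: "(D ^^ n) a = \<zero>" using locally_nilpotent a by blast
  obtain m where m: "(D ^^ m) a = \<zero>" "\<And>k. k < m \<Longrightarrow> (D ^^ k) a \<noteq> \<zero>"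
    using ex_least_nat_le[of "\<lambda>k. (D ^^ k) a = \<zero>" n] n a by (cases "n = 0") auto
  then obtain i where "m = Suc i" using a by (cases m) auto
  thus ?thesis using m by auto
qed

text \<open>Degrees are additive: if \<open>a\<close>, \<open>b\<close> have degrees \<open>i\<close>, \<open>j\<close>, then \<open>D\<^sup>i\<^sup>+\<^sup>j (a b)\<close> is the
  single surviving Leibniz term \<open>(i+j choose i) D\<^sup>i a D\<^sup>j b\<close>, which is nonzero in a
  domain of characteristic zero.\<close>
lemma degree_mult:
  assumes a: "a \<in> carrier R" and b: "b \<in> carrier R"
    and ai: "(D ^^ i) a \<noteq> \<zero>" "(D ^^ Suc i) a = \<zero>"
    and bj: "(D ^^ j) b \<noteq> \<zero>" "(D ^^ Suc j) b = \<zero>"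
  shows "(D ^^ (i + j)) (a \<otimes> b) \<noteq> \<zero>"
proof -
  define f where "f k = add_pow R ((i + j) choose k) ((D ^^ k) a \<otimes> (D ^^ (i + j - k)) b)" for k
  have fc: "f k \<in> carrier R" for k using a b by (simp add: f_def D_pow_closed)
  have vanish: "f k = (if i = k then f k else \<zero>)" for k
  proof (cases "k < i")
    case True
    hence "(D ^^ (i + j - k)) b = \<zero>" using D_pow_vanishes_mono[OF bj(2)] by simp
    thus ?thesis using True a by (simp add: f_def D_pow_closed)
  next
    case False
    hence "i \<noteq> k \<Longrightarrow> (D ^^ k) a = \<zero>" using D_pow_vanishes_mono[OF ai(2), of k] by simp
    thus ?thesis using b by (simp add: f_def D_pow_closed)
  qed
  have "(D ^^ (i + j)) (a \<otimes> b) = (\<Oplus>k\<in>{..i+j}. f k)"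
    unfolding f_def by (rule general_leibniz[OF a b])
  also have "\<dots> = (\<Oplus>k\<in>{..i+j}. if i = k then f k else \<zero>)"
    by (rule finsum_cong) (use fc vanish in auto)
  also have "\<dots> = f i" by (rule finsum_singleton) (use fc in auto)
  finally have e: "(D ^^ (i + j)) (a \<otimes> b) = f i" .
  have "(D ^^ i) a \<otimes> (D ^^ j) b \<noteq> \<zero>" using ai bj a b by (simp add: integral_iff D_pow_closed)
  hence "f i \<noteq> \<zero>" unfolding f_def using char0 a b by (simp add: D_pow_closed)
  thus ?thesis using e by simp
qed

text \<open>If \<open>x\<close> divides \<open>D x\<close> then \<open>D x = 0\<close>: otherwise \<open>D x = x g\<close> would have degree
  \<open>deg x + deg g \<ge> deg x\<close>, although it is a derivative of \<open>x\<close> and so has smaller degree.\<close>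
lemma divides_derivative_imp_zero:
  assumes x: "x \<in> carrier R" and g: "g \<in> carrier R" and e: "D x = x \<otimes> g"
  shows "D x = \<zero>"
proof (rule ccontr)
  assume ne: "D x \<noteq> \<zero>"
  hence x0: "x \<noteq> \<zero>" and g0: "g \<noteq> \<zero>" using e x g by auto
  obtain i where i: "(D ^^ i) x \<noteq> \<zero>" "(D ^^ Suc i) x = \<zero>" using exists_degree[OF x x0] by blast
  obtain j where j: "(D ^^ j) g \<noteq> \<zero>" "(D ^^ Suc j) g = \<zero>" using exists_degree[OF g g0] by blast
  have "(D ^^ (i + j)) (x \<otimes> g) = (D ^^ Suc (i + j)) x"
    using e by (simp add: funpow_Suc_right del: funpow.simps)
  also have "\<dots> = \<zero>" using D_pow_vanishes_mono[OF i(2), of "Suc (i + j)"] by simp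
  finally show False using degree_mult[OF x g i j] by simp
qed

end

text \<open>A coefficient sequence is a polynomial as soon as it vanishes wherever a shifted
  polynomial sequence does; this covers all the coefficientwise constructions below.\<close>
lemma UP_carrier_by_bound:
  assumes p: "p \<in> carrier (UP R)" and q: "\<And>n. q n \<in> carrier S"
    and z: "\<And>n. p (n + k) = \<zero>\<^bsub>R\<^esub> \<Longrightarrow> q n = \<zero>\<^bsub>S\<^esub>"
  shows "q \<in> carrier (UP S)"
proof -
  obtain N where N: "bound \<zero>\<^bsub>R\<^esub> N p" using p by (auto simp: UP_def up_def)
  have "bound \<zero>\<^bsub>S\<^esub> N q"
    using N z unfolding bound_def by (metis add.commute trans_less_add2)
  thus ?thesis using q by (auto simp: UP_def)
qed

text \<open>Inside the polynomial locales, \<open>coeff\<close> and \<open>monom\<close> denote list-polynomial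
  operations; these abbreviations name the operations of \<open>UP\<close> unambiguously.\<close>
abbreviation UP_coeff where "UP_coeff \<equiv> up_ring.coeff"
abbreviation UP_monom where "UP_monom \<equiv> up_ring.monom"

context UP_cring
begin

lemma coeff_P_apply: "p \<in> carrier P \<Longrightarrow> UP_coeff P p n = p n"
  unfolding P_def UP_def by simp

lemma coeff_mult_0:
  assumes "p \<in> carrier P" "q \<in> carrier P"
  shows "UP_coeff P (p \<otimes>\<^bsub>P\<^esub> q) 0 = UP_coeff P p 0 \<otimes> UP_coeff P q 0"
  using assms by (simp add: R.finsum_0)

lemma const_term_hom: "(\<lambda>p. UP_coeff P p 0) \<in> ring_hom P R"
  by (rule ring_hom_memI) (simp_all add: coeff_mult_0)

definition div_var :: "(nat \<Rightarrow> 'a) \<Rightarrow> nat \<Rightarrow> 'a" where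
  "div_var p = (\<lambda>n. UP_coeff P p (Suc n))"

lemma div_var_closed:
  assumes p: "p \<in> carrier P"
  shows "div_var p \<in> carrier P"
proof -
  have "div_var p \<in> carrier (UP R)"
  proof (rule UP_carrier_by_bound[where k = 1])
    show "p \<in> carrier (UP R)" using p by (simp add: P_def)
  qed (use p coeff_closed[OF p] in \<open>simp_all add: div_var_def coeff_P_apply\<close>)
  thus ?thesis by (simp add: P_def)
qed

lemma coeff_div_var: "p \<in> carrier P \<Longrightarrow> UP_coeff P (div_var p) n = UP_coeff P p (Suc n)"
  using div_var_closed by (simp add: coeff_P_apply div_var_def)

lemma coeff_var_mult:
  assumes "q \<in> carrier P"
  shows "UP_coeff P (UP_monom P \<one> 1 \<otimes>\<^bsub>P\<^esub> q) 0 = \<zero>"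
    and "UP_coeff P (UP_monom P \<one> 1 \<otimes>\<^bsub>P\<^esub> q) (Suc n) = UP_coeff P q n"
proof -
  show "UP_coeff P (UP_monom P \<one> 1 \<otimes>\<^bsub>P\<^esub> q) 0 = \<zero>"
    using assms by (simp add: coeff_mult_0)
  have "UP_coeff P (UP_monom P \<one> 1 \<otimes>\<^bsub>P\<^esub> q) (n + 1) = \<one> \<otimes> UP_coeff P q n"
    by (rule coeff_monom_mult) (use assms in simp_all)
  thus "UP_coeff P (UP_monom P \<one> 1 \<otimes>\<^bsub>P\<^esub> q) (Suc n) = UP_coeff P q n"
    using assms by (simp del: coeff_mult)
qed

lemma div_var_eq:
  assumes p: "p \<in> carrier P" and p0: "UP_coeff P p 0 = \<zero>"
  shows "p = UP_monom P \<one> 1 \<otimes>\<^bsub>P\<^esub> div_var p"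
proof (rule up_eqI)
  fix n show "UP_coeff P p n = UP_coeff P (UP_monom P \<one> 1 \<otimes>\<^bsub>P\<^esub> div_var p) n"
    using p0 coeff_var_mult[OF div_var_closed[OF p]] by (cases n) (simp_all add: coeff_div_var p)
qed (use p div_var_closed[OF p] in auto)

end

context UP_domain
begin

lemma domain_P: "domain P"
  using UP_domain by (simp add: P_def)

lemma monom_one_nonzero: "UP_monom P \<one> n \<noteq> \<zero>\<^bsub>P\<^esub>"
proof
  assume "UP_monom P \<one> n = \<zero>\<^bsub>P\<^esub>"
  hence "UP_coeff P (UP_monom P \<one> n) n = UP_coeff P \<zero>\<^bsub>P\<^esub> n" by simp
  thus False by simp
qed

lemma monom_one_cancel:
  "u \<in> carrier P \<Longrightarrow> v \<in> carrier P \<Longrightarrow> UP_monom P \<one> n \<otimes>\<^bsub>P\<^esub> u = UP_monom P \<one> n \<otimes>\<^bsub>P\<^esub> v \<Longrightarrow> u = v"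
  using domain.m_lcancel[OF domain_P, of "UP_monom P \<one> n" u v] monom_one_nonzero[of n] by simp

lemma monom_one_mult_zero:
  "u \<in> carrier P \<Longrightarrow> UP_monom P \<one> n \<otimes>\<^bsub>P\<^esub> u = \<zero>\<^bsub>P\<^esub> \<Longrightarrow> u = \<zero>\<^bsub>P\<^esub>"
  using domain.integral[OF domain_P, of "UP_monom P \<one> n" u] monom_one_nonzero[of n] by auto

lemma divisible_by_all_var_powers:
  assumes q: "q \<in> carrier P" and dv: "\<And>n. \<exists>h\<in>carrier P. q = UP_monom P \<one> n \<otimes>\<^bsub>P\<^esub> h"
  shows "q = \<zero>\<^bsub>P\<^esub>"
proof (rule ccontr)
  assume q0: "q \<noteq> \<zero>\<^bsub>P\<^esub>"
  obtain h where h: "h \<in> carrier P" "q = UP_monom P \<one> (Suc (deg R q)) \<otimes>\<^bsub>P\<^esub> h" using dv by blast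
  have "h \<noteq> \<zero>\<^bsub>P\<^esub>" using h q0 by auto
  hence "deg R q = Suc (deg R q) + deg R h"
    using h monom_one_nonzero deg_mult[of "UP_monom P \<one> (Suc (deg R q))" h] by simp
  thus False by simp
qed

end

lemma C_hom_closed: "\<phi> \<in> ring_hom complex_ring R \<Longrightarrow> \<phi> c \<in> carrier R"
  using ring_hom_closed[of \<phi> complex_ring R c] by (simp add: complex_ring_def)

lemma C_hom_add: "\<phi> \<in> ring_hom complex_ring R \<Longrightarrow> \<phi> (x + y) = \<phi> x \<oplus>\<^bsub>R\<^esub> \<phi> y"
  using ring_hom_add[of \<phi> complex_ring R x y] by (simp add: complex_ring_def)

lemma C_hom_mult: "\<phi> \<in> ring_hom complex_ring R \<Longrightarrow> \<phi> (x * y) = \<phi> x \<otimes>\<^bsub>R\<^esub> \<phi> y"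
  using ring_hom_mult[of \<phi> complex_ring R x y] by (simp add: complex_ring_def)

lemma C_hom_one: "\<phi> \<in> ring_hom complex_ring R \<Longrightarrow> \<phi> 1 = \<one>\<^bsub>R\<^esub>"
  using ring_hom_one[of \<phi> complex_ring R] by (simp add: complex_ring_def)

lemma LND_iff:
  assumes "cring R"
  shows "LND R \<phi> D \<longleftrightarrow> ring_derivation R D \<and>
    (\<forall>c. \<forall>a\<in>carrier R. D (\<phi> c \<otimes>\<^bsub>R\<^esub> a) = \<phi> c \<otimes>\<^bsub>R\<^esub> D a) \<and>
    (\<forall>a\<in>carrier R. \<exists>n. (D ^^ n) a = \<zero>\<^bsub>R\<^esub>)"
  using assms unfolding LND_def C_derivation_def ring_derivation_def ring_derivation_axioms_def
  by auto

lemma LND_closed: "cring R \<Longrightarrow> LND R \<phi> D \<Longrightarrow> a \<in> carrier R \<Longrightarrow> D a \<in> carrier R"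
  by (auto simp: LND_iff ring_derivation.D_closed)

text \<open>A nonzero \<open>\<complex>\<close>-algebra domain has characteristic zero: \<open>k \<cdot> 1\<close> is the image of the
  unit \<open>k\<close> of \<open>\<complex>\<close>.\<close>
lemma (in domain) C_algebra_char0:
  assumes \<phi>: "\<phi> \<in> ring_hom complex_ring R" and k: "0 < k" and a: "a \<in> carrier R" "a \<noteq> \<zero>"
  shows "add_pow R (k::nat) a \<noteq> \<zero>"
proof
  have \<phi>0: "\<phi> 0 = \<zero>"
  proof -
    have "\<phi> 0 \<oplus> \<phi> 0 = \<phi> 0 \<oplus> \<zero>" using C_hom_add[OF \<phi>, of 0 0] C_hom_closed[OF \<phi>] by simp
    thus ?thesis using C_hom_closed[OF \<phi>] by (meson add.l_cancel zero_closed)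
  qed
  have nat: "add_pow R n \<one> = \<phi> (of_nat n)" for n
    by (induction n) (simp_all add: \<phi>0 C_hom_add[OF \<phi>] C_hom_one[OF \<phi>] C_hom_closed[OF \<phi>] a_comm)
  have "\<one> = \<phi> (of_nat k * inverse (of_nat k))" using k C_hom_one[OF \<phi>] by simp
  also have "\<dots> = add_pow R k \<one> \<otimes> \<phi> (inverse (of_nat k))" by (simp add: C_hom_mult[OF \<phi>] nat)
  finally have unit: "add_pow R k \<one> \<noteq> \<zero>" using C_hom_closed[OF \<phi>] by auto
  assume "add_pow R k a = \<zero>"
  hence "add_pow R k \<one> \<otimes> a = \<zero>" using add_pow_ldistr[of \<one> a k] a by simp
  thus False using unit a integral by auto
qed

definition UP_C_map :: "('a, 'b) ring_scheme \<Rightarrow> (complex \<Rightarrow> 'a) \<Rightarrow> complex \<Rightarrow> nat \<Rightarrow> 'a" where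
  "UP_C_map R \<phi> c = UP_monom (UP R) (\<phi> c) 0"

lemma (in UP_cring) UP_C_map_hom:
  "\<phi> \<in> ring_hom complex_ring R \<Longrightarrow> UP_C_map R \<phi> \<in> ring_hom complex_ring P"
proof -
  assume "\<phi> \<in> ring_hom complex_ring R"
  moreover have "UP_C_map R \<phi> = (\<lambda>a. UP_monom P a 0) \<circ> \<phi>"
    by (simp add: fun_eq_iff UP_C_map_def P_def)
  ultimately show ?thesis using ring_hom_trans const_ring_hom by simp
qed

context UP_cring
begin

definition coeffwise :: "('a \<Rightarrow> 'a) \<Rightarrow> (nat \<Rightarrow> 'a) \<Rightarrow> nat \<Rightarrow> 'a" where
  "coeffwise D p = (\<lambda>n. D (UP_coeff P p n))"

context
  fixes D assumes D: "ring_derivation R D"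
begin

interpretation D: ring_derivation R D by (rule D)

lemma coeffwise_closed: "p \<in> carrier P \<Longrightarrow> coeffwise D p \<in> carrier P"
  using UP_carrier_by_bound[of p R "coeffwise D p" R 0] coeff_closed D.D_closed
  by (simp add: P_def coeffwise_def coeff_P_apply[unfolded P_def])

lemma coeff_coeffwise: "p \<in> carrier P \<Longrightarrow> UP_coeff P (coeffwise D p) n = D (UP_coeff P p n)"
  using coeffwise_closed by (simp add: coeff_P_apply coeffwise_def)

lemma coeffwise_derivation: "ring_derivation P (coeffwise D)"
proof
  fix a b assume a: "a \<in> carrier P" and b: "b \<in> carrier P"
  note cl = coeffwise_closed and cc = coeff_coeffwise
  show "coeffwise D (a \<oplus>\<^bsub>P\<^esub> b) = coeffwise D a \<oplus>\<^bsub>P\<^esub> coeffwise D b"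
    by (rule up_eqI) (use a b cl cc D.D_add in auto)
  show "coeffwise D (a \<otimes>\<^bsub>P\<^esub> b) = a \<otimes>\<^bsub>P\<^esub> coeffwise D b \<oplus>\<^bsub>P\<^esub> coeffwise D a \<otimes>\<^bsub>P\<^esub> b"
  proof (rule up_eqI)
    fix n
    have "UP_coeff P (coeffwise D (a \<otimes>\<^bsub>P\<^esub> b)) n
        = (\<Oplus>i\<in>{..n}. D (UP_coeff P a i \<otimes> UP_coeff P b (n - i)))"
      using a b cc by (simp add: D.D_finsum)
    also have "\<dots> = (\<Oplus>i\<in>{..n}. UP_coeff P a i \<otimes> D (UP_coeff P b (n - i))
                                 \<oplus> D (UP_coeff P a i) \<otimes> UP_coeff P b (n - i))"
      by (rule R.finsum_cong) (use a b D.D_mult D.D_closed in auto)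
    also have "\<dots> = (\<Oplus>i\<in>{..n}. UP_coeff P a i \<otimes> D (UP_coeff P b (n - i)))
                   \<oplus> (\<Oplus>i\<in>{..n}. D (UP_coeff P a i) \<otimes> UP_coeff P b (n - i))"
      by (rule R.finsum_addf) (use a b D.D_closed in auto)
    also have "\<dots> = UP_coeff P (a \<otimes>\<^bsub>P\<^esub> coeffwise D b \<oplus>\<^bsub>P\<^esub> coeffwise D a \<otimes>\<^bsub>P\<^esub> b) n"
      using a b cl cc by simp
    finally show "UP_coeff P (coeffwise D (a \<otimes>\<^bsub>P\<^esub> b)) n
        = UP_coeff P (a \<otimes>\<^bsub>P\<^esub> coeffwise D b \<oplus>\<^bsub>P\<^esub> coeffwise D a \<otimes>\<^bsub>P\<^esub> b) n" .
  qed (use a b cl in auto)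
qed (rule coeffwise_closed)

lemma coeffwise_monom: "a \<in> carrier R \<Longrightarrow> coeffwise D (UP_monom P a n) = UP_monom P (D a) n"
  by (rule up_eqI) (use coeffwise_closed coeff_coeffwise D.D_closed in auto)

lemma coeff_coeffwise_pow:
  "p \<in> carrier P \<Longrightarrow> UP_coeff P ((coeffwise D ^^ k) p) n = (D ^^ k) (UP_coeff P p n)"
proof (induction k)
  case (Suc k)
  interpret C: ring_derivation P "coeffwise D" by (rule coeffwise_derivation)
  show ?case using Suc coeff_coeffwise[OF C.D_pow_closed[OF Suc.prems]] by simp
qed simp

end

text \<open>An LND of \<open>R\<close> extends coefficientwise to an LND of \<open>R[T]\<close>: a polynomial has finitely
  many coefficients, and a common nilpotency exponent kills all of them.\<close>
lemma coeffwise_LND: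
  assumes \<phi>: "\<phi> \<in> ring_hom complex_ring R" and lnd: "LND R \<phi> D"
  shows "LND P (UP_C_map R \<phi>) (coeffwise D)"
proof -
  have D: "ring_derivation R D" and lin: "\<And>c a. a \<in> carrier R \<Longrightarrow> D (\<phi> c \<otimes> a) = \<phi> c \<otimes> D a"
    and nil: "\<And>a. a \<in> carrier R \<Longrightarrow> \<exists>n. (D ^^ n) a = \<zero>"
    using lnd LND_iff[OF R.is_cring] by auto
  interpret D: ring_derivation R D by (rule D)
  interpret C: ring_derivation P "coeffwise D" by (rule coeffwise_derivation[OF D])
  have \<phi>c: "\<phi> c \<in> carrier R" for c
    by (rule C_hom_closed[OF \<phi>])
  show ?thesis
    unfolding LND_iff[OF P.is_cring]
  proof (intro conjI allI ballI)
    show "ring_derivation P (coeffwise D)" by (rule coeffwise_derivation[OF D])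
  next
    fix c p assume p: "p \<in> carrier P"
    show "coeffwise D (UP_C_map R \<phi> c \<otimes>\<^bsub>P\<^esub> p) = UP_C_map R \<phi> c \<otimes>\<^bsub>P\<^esub> coeffwise D p"
      unfolding UP_C_map_def P_def[symmetric]
        monom_mult_is_smult[OF \<phi>c p] monom_mult_is_smult[OF \<phi>c coeffwise_closed[OF D p]]
      by (rule up_eqI) (use p \<phi>c coeffwise_closed[OF D] coeff_coeffwise[OF D] lin in auto)
  next
    fix p assume p: "p \<in> carrier P"
    obtain N where N: "bound \<zero> N p" using p by (auto simp: P_def UP_def up_def)
    have "\<forall>i\<in>{..N}. \<exists>k. (D ^^ k) (UP_coeff P p i) = \<zero>" using nil p by auto
    then obtain k where k: "\<And>i. i \<le> N \<Longrightarrow> (D ^^ k i) (UP_coeff P p i) = \<zero>"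
      by (metis atMost_iff)
    define K where "K = (\<Sum>i\<le>N. k i)"
    have "(D ^^ K) (UP_coeff P p n) = \<zero>" for n
    proof (cases "n \<le> N")
      case True
      hence "k n \<le> K" unfolding K_def by (intro member_le_sum) auto
      thus ?thesis using k[OF True] D.D_pow_vanishes_mono by blast
    next
      case False
      hence "p n = \<zero>" using N unfolding bound_def by auto
      moreover have "(D ^^ K) \<zero> = \<zero>" by (induction K) auto
      ultimately show ?thesis using p by (simp add: coeff_P_apply)
    qed
    hence "(coeffwise D ^^ K) p = \<zero>\<^bsub>P\<^esub>"
      by (intro up_eqI) (use p C.D_pow_closed coeff_coeffwise_pow[OF D p] in auto)
    thus "\<exists>n. (coeffwise D ^^ n) p = \<zero>\<^bsub>P\<^esub>" by blast
  qed
qed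

end

section \<open>Over a rigid domain, an LND of \<open>R[T]\<close> killing \<open>T\<close> is zero\<close>

context UP_cring
begin

text \<open>A derivation killing \<open>T\<close> maps \<open>T \<cdot> R[T]\<close> into itself, so the constant term of
  \<open>E f\<close> only depends on the constant term of \<open>f\<close>.\<close>
lemma const_term_of_derivative:
  assumes E: "ring_derivation P E" and EX: "E (UP_monom P \<one> 1) = \<zero>\<^bsub>P\<^esub>" and f: "f \<in> carrier P"
  shows "UP_coeff P (E f) 0 = UP_coeff P (E (UP_monom P (UP_coeff P f 0) 0)) 0"
proof -
  interpret E: ring_derivation P E by (rule E)
  define c where "c = UP_coeff P f 0"
  define g where "g = f \<ominus>\<^bsub>P\<^esub> UP_monom P c 0"
  have c: "c \<in> carrier R" and g: "g \<in> carrier P" using f by (simp_all add: c_def g_def)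
  have "UP_coeff P g 0 = \<zero>" using f by (simp add: g_def c_def a_minus_def R.r_neg)
  hence "E g = E (UP_monom P \<one> 1 \<otimes>\<^bsub>P\<^esub> div_var g)" using div_var_eq[OF g] by simp
  also have "\<dots> = UP_monom P \<one> 1 \<otimes>\<^bsub>P\<^esub> E (div_var g)"
    using E.D_mult EX div_var_closed[OF g] E.D_closed by simp
  finally have g0: "UP_coeff P (E g) 0 = \<zero>"
    using coeff_var_mult(1) E.D_closed div_var_closed[OF g] by simp
  have "f = UP_monom P c 0 \<oplus>\<^bsub>P\<^esub> g" using f c unfolding g_def
    by (simp add: a_minus_def P.a_ac P.r_neg)
  hence "E f = E (UP_monom P c 0) \<oplus>\<^bsub>P\<^esub> E g" using E.D_add c g by simp
  thus ?thesis using g0 c g E.D_closed by (simp add: c_def)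
qed

lemma const_term_LND:
  assumes \<phi>: "\<phi> \<in> ring_hom complex_ring R" and lnd: "LND P (UP_C_map R \<phi>) E"
    and EX: "E (UP_monom P \<one> 1) = \<zero>\<^bsub>P\<^esub>"
  shows "LND R \<phi> (\<lambda>r. UP_coeff P (E (UP_monom P r 0)) 0)" (is "LND R \<phi> ?\<delta>")
proof -
  have E: "ring_derivation P E"
    and lin: "\<And>c f. f \<in> carrier P \<Longrightarrow> E (UP_C_map R \<phi> c \<otimes>\<^bsub>P\<^esub> f) = UP_C_map R \<phi> c \<otimes>\<^bsub>P\<^esub> E f"
    and nil: "\<And>f. f \<in> carrier P \<Longrightarrow> \<exists>n. (E ^^ n) f = \<zero>\<^bsub>P\<^esub>"
    using lnd LND_iff[OF P.is_cring] by auto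
  interpret E: ring_derivation P E by (rule E)
  have \<phi>c: "\<phi> c \<in> carrier R" for c by (rule C_hom_closed[OF \<phi>])
  have const_mult: "UP_monom P (a \<otimes> b) 0 = UP_monom P a 0 \<otimes>\<^bsub>P\<^esub> UP_monom P b 0"
    if "a \<in> carrier R" "b \<in> carrier R" for a b
    using that monom_mult[of a b 0 0] by simp
  have \<delta>: "ring_derivation R ?\<delta>"
  proof
    fix a b assume a: "a \<in> carrier R" and b: "b \<in> carrier R"
    show "?\<delta> a \<in> carrier R" using a E.D_closed by simp
    show "?\<delta> (a \<oplus> b) = ?\<delta> a \<oplus> ?\<delta> b" using a b E.D_add E.D_closed by simp
    show "?\<delta> (a \<otimes> b) = a \<otimes> ?\<delta> b \<oplus> ?\<delta> a \<otimes> b"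
      using a b const_mult E.D_mult E.D_closed by (simp add: coeff_mult_0)
  qed
  have pow: "(?\<delta> ^^ n) (UP_coeff P f 0) = UP_coeff P ((E ^^ n) f) 0" if f: "f \<in> carrier P" for f n
    by (induction n) (simp_all add: const_term_of_derivative[OF E EX E.D_pow_closed[OF f]])
  show ?thesis
    unfolding LND_iff[OF R.is_cring]
  proof (intro conjI allI ballI)
    fix c a assume a: "a \<in> carrier R"
    show "?\<delta> (\<phi> c \<otimes> a) = \<phi> c \<otimes> ?\<delta> a"
      using a \<phi>c const_mult lin[of "UP_monom P a 0" c] E.D_closed
      by (simp add: UP_C_map_def P_def[symmetric] coeff_mult_0)
  next
    fix a assume a: "a \<in> carrier R"
    obtain n where "(E ^^ n) (UP_monom P a 0) = \<zero>\<^bsub>P\<^esub>" using nil[of "UP_monom P a 0"] a by auto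
    hence "(?\<delta> ^^ n) a = \<zero>" using pow[of "UP_monom P a 0" n] a by simp
    thus "\<exists>n. (?\<delta> ^^ n) a = \<zero>" ..
  qed (rule \<delta>)
qed

lemma derivation_pow_var_factor:
  assumes E: "ring_derivation P E" and EX: "E (UP_monom P \<one> 1) = \<zero>\<^bsub>P\<^esub>"
    and E'c: "\<And>f. f \<in> carrier P \<Longrightarrow> E' f \<in> carrier P"
    and EE': "\<And>f. f \<in> carrier P \<Longrightarrow> E f = UP_monom P \<one> 1 \<otimes>\<^bsub>P\<^esub> E' f"
    and f: "f \<in> carrier P"
  shows "(E ^^ n) f = UP_monom P \<one> n \<otimes>\<^bsub>P\<^esub> (E' ^^ n) f"
proof -
  interpret E: ring_derivation P E by (rule E)
  have E'pow: "(E' ^^ n) f \<in> carrier P" for n by (induction n) (simp_all add: E'c f)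
  have Emon: "E (UP_monom P \<one> n) = \<zero>\<^bsub>P\<^esub>" for n
  proof (induction n)
    case (Suc n) thus ?case
      using E.D_mult[of "UP_monom P \<one> 1" "UP_monom P \<one> n"] EX monom_one_mult[of 1 n] by simp
  qed simp
  show ?thesis
  proof (induction n)
    case (Suc n)
    have "(E ^^ Suc n) f = UP_monom P \<one> n \<otimes>\<^bsub>P\<^esub> E ((E' ^^ n) f)"
      using Suc E.D_mult[OF _ E'pow] Emon E.D_closed[OF E'pow] E'pow by simp
    also have "\<dots> = UP_monom P \<one> (n + 1) \<otimes>\<^bsub>P\<^esub> (E' ^^ Suc n) f"
      using EE'[OF E'pow[of n]] E'pow[of "Suc n"] monom_one_mult[of n 1] by (simp add: P.m_assoc)
    finally show ?case by simp
  qed (simp add: f)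
qed

end

context UP_domain
begin

text \<open>If all values of \<open>E\<close> lie in \<open>T \<cdot> R[T]\<close>, then \<open>E' = E / T\<close> is again a derivation
  (cancel the nonzerodivisor \<open>T\<close> from the rules for \<open>E\<close>).\<close>
lemma div_var_derivation:
  assumes E: "ring_derivation P E" and E0: "\<And>f. f \<in> carrier P \<Longrightarrow> UP_coeff P (E f) 0 = \<zero>"
  shows "ring_derivation P (\<lambda>f. div_var (E f))" (is "ring_derivation P ?E'")
proof -
  interpret E: ring_derivation P E by (rule E)
  let ?X = "UP_monom P \<one> 1"
  have Xc: "?X \<in> carrier P" by simp
  have E'c: "?E' f \<in> carrier P" if "f \<in> carrier P" for f using that div_var_closed E.D_closed by blast
  have EE': "E f = ?X \<otimes>\<^bsub>P\<^esub> ?E' f" if "f \<in> carrier P" for f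
    using div_var_eq[OF E.D_closed E0] that by blast
  show ?thesis
  proof
    fix a b assume a: "a \<in> carrier P" and b: "b \<in> carrier P"
    show "?E' a \<in> carrier P" by (rule E'c[OF a])
    show "?E' (a \<oplus>\<^bsub>P\<^esub> b) = ?E' a \<oplus>\<^bsub>P\<^esub> ?E' b"
    proof (rule monom_one_cancel)
      have "?X \<otimes>\<^bsub>P\<^esub> ?E' (a \<oplus>\<^bsub>P\<^esub> b) = E a \<oplus>\<^bsub>P\<^esub> E b"
        using EE'[of "a \<oplus>\<^bsub>P\<^esub> b"] E.D_add a b by simp
      also have "\<dots> = ?X \<otimes>\<^bsub>P\<^esub> (?E' a \<oplus>\<^bsub>P\<^esub> ?E' b)"
        using EE'[OF a] EE'[OF b] E'c[OF a] E'c[OF b] Xc by (simp add: P.r_distr)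
      finally show "?X \<otimes>\<^bsub>P\<^esub> ?E' (a \<oplus>\<^bsub>P\<^esub> b) = ?X \<otimes>\<^bsub>P\<^esub> (?E' a \<oplus>\<^bsub>P\<^esub> ?E' b)" .
    qed (use a b E'c in auto)
    show "?E' (a \<otimes>\<^bsub>P\<^esub> b) = a \<otimes>\<^bsub>P\<^esub> ?E' b \<oplus>\<^bsub>P\<^esub> ?E' a \<otimes>\<^bsub>P\<^esub> b"
    proof (rule monom_one_cancel)
      have "?X \<otimes>\<^bsub>P\<^esub> ?E' (a \<otimes>\<^bsub>P\<^esub> b) = a \<otimes>\<^bsub>P\<^esub> E b \<oplus>\<^bsub>P\<^esub> E a \<otimes>\<^bsub>P\<^esub> b"
        using EE'[of "a \<otimes>\<^bsub>P\<^esub> b"] E.D_mult a b by simp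
      also have "\<dots> = a \<otimes>\<^bsub>P\<^esub> (?X \<otimes>\<^bsub>P\<^esub> ?E' b) \<oplus>\<^bsub>P\<^esub> (?X \<otimes>\<^bsub>P\<^esub> ?E' a) \<otimes>\<^bsub>P\<^esub> b"
        using EE'[OF a] EE'[OF b] by simp
      finally show "?X \<otimes>\<^bsub>P\<^esub> ?E' (a \<otimes>\<^bsub>P\<^esub> b) = ?X \<otimes>\<^bsub>P\<^esub> (a \<otimes>\<^bsub>P\<^esub> ?E' b \<oplus>\<^bsub>P\<^esub> ?E' a \<otimes>\<^bsub>P\<^esub> b)"
        using a b E'c[OF a] E'c[OF b] Xc by (simp add: P.r_distr P.m_ac)
    qed (use a b E'c in auto)
  qed
qed

lemma var_killing_LND_div_var:
  assumes \<phi>: "\<phi> \<in> ring_hom complex_ring R" and rig: "rigid R \<phi>"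
    and lnd: "LND P (UP_C_map R \<phi>) E" and EX: "E (UP_monom P \<one> 1) = \<zero>\<^bsub>P\<^esub>"
  shows "LND P (UP_C_map R \<phi>) (\<lambda>f. div_var (E f))"
    and "div_var (E (UP_monom P \<one> 1)) = \<zero>\<^bsub>P\<^esub>"
    and "\<And>f. f \<in> carrier P \<Longrightarrow> E f = UP_monom P \<one> 1 \<otimes>\<^bsub>P\<^esub> div_var (E f)"
proof -
  let ?X = "UP_monom P \<one> 1" and ?E' = "\<lambda>f. div_var (E f)" and ?\<psi> = "UP_C_map R \<phi>"
  have E: "ring_derivation P E"
    and lin: "\<And>c f. f \<in> carrier P \<Longrightarrow> E (?\<psi> c \<otimes>\<^bsub>P\<^esub> f) = ?\<psi> c \<otimes>\<^bsub>P\<^esub> E f"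
    and nil: "\<And>f. f \<in> carrier P \<Longrightarrow> \<exists>n. (E ^^ n) f = \<zero>\<^bsub>P\<^esub>"
    using lnd LND_iff[OF P.is_cring] by auto
  interpret E: ring_derivation P E by (rule E)
  have \<psi>c: "?\<psi> c \<in> carrier P" for c using C_hom_closed[OF UP_C_map_hom[OF \<phi>]] .
  have "UP_coeff P (E (UP_monom P r 0)) 0 = \<zero>" if "r \<in> carrier R" for r
    using rig const_term_LND[OF \<phi> lnd EX] that unfolding rigid_def by blast
  hence E0: "UP_coeff P (E f) 0 = \<zero>" if "f \<in> carrier P" for f
    using const_term_of_derivative[OF E EX that] that by simp
  have E'c: "?E' f \<in> carrier P" if "f \<in> carrier P" for f using that div_var_closed E.D_closed by blast
  show EE': "E f = ?X \<otimes>\<^bsub>P\<^esub> ?E' f" if "f \<in> carrier P" for f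
    using div_var_eq[OF E.D_closed E0] that by blast
  show "?E' ?X = \<zero>\<^bsub>P\<^esub>"
  proof (rule monom_one_cancel[of _ _ 1])
    show "?X \<otimes>\<^bsub>P\<^esub> ?E' ?X = ?X \<otimes>\<^bsub>P\<^esub> \<zero>\<^bsub>P\<^esub>" using EE'[of ?X] EX by simp
  qed (use E'c in auto)
  show "LND P ?\<psi> ?E'"
    unfolding LND_iff[OF P.is_cring]
  proof (intro conjI allI ballI)
    show "ring_derivation P ?E'" by (rule div_var_derivation[OF E E0])
  next
    fix c f assume f: "f \<in> carrier P"
    show "?E' (?\<psi> c \<otimes>\<^bsub>P\<^esub> f) = ?\<psi> c \<otimes>\<^bsub>P\<^esub> ?E' f"
    proof (rule monom_one_cancel[of _ _ 1])
      have "?X \<otimes>\<^bsub>P\<^esub> ?E' (?\<psi> c \<otimes>\<^bsub>P\<^esub> f) = E (?\<psi> c \<otimes>\<^bsub>P\<^esub> f)"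
        using EE'[of "?\<psi> c \<otimes>\<^bsub>P\<^esub> f"] f \<psi>c by simp
      also have "\<dots> = ?\<psi> c \<otimes>\<^bsub>P\<^esub> (?X \<otimes>\<^bsub>P\<^esub> ?E' f)" using lin[OF f] EE'[OF f] by simp
      finally have "?X \<otimes>\<^bsub>P\<^esub> ?E' (?\<psi> c \<otimes>\<^bsub>P\<^esub> f) = ?\<psi> c \<otimes>\<^bsub>P\<^esub> (?X \<otimes>\<^bsub>P\<^esub> ?E' f)" .
      thus "?X \<otimes>\<^bsub>P\<^esub> ?E' (?\<psi> c \<otimes>\<^bsub>P\<^esub> f) = ?X \<otimes>\<^bsub>P\<^esub> (?\<psi> c \<otimes>\<^bsub>P\<^esub> ?E' f)"
        using \<psi>c E'c[OF f] by (simp add: P.m_lcomm)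
    qed (use f E'c \<psi>c in auto)
  next
    fix f assume f: "f \<in> carrier P"
    obtain n where "(E ^^ n) f = \<zero>\<^bsub>P\<^esub>" using nil f by blast
    hence "UP_monom P \<one> n \<otimes>\<^bsub>P\<^esub> (?E' ^^ n) f = \<zero>\<^bsub>P\<^esub>"
      using derivation_pow_var_factor[OF E EX E'c EE' f] by simp
    moreover have "(?E' ^^ n) f \<in> carrier P" by (induction n) (simp_all add: E'c f)
    ultimately show "\<exists>n. (?E' ^^ n) f = \<zero>\<^bsub>P\<^esub>" using monom_one_mult_zero by blast
  qed
qed

text \<open>Iterating the step, every value of such an LND is divisible by all powers of \<open>T\<close>,
  hence zero.\<close>
theorem rigid_imp_var_killing_LND_zero:
  assumes \<phi>: "\<phi> \<in> ring_hom complex_ring R" and rig: "rigid R \<phi>"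
    and lnd: "LND P (UP_C_map R \<phi>) E" and EX: "E (UP_monom P \<one> 1) = \<zero>\<^bsub>P\<^esub>"
    and f: "f \<in> carrier P"
  shows "E f = \<zero>\<^bsub>P\<^esub>"
proof -
  have "\<forall>E. LND P (UP_C_map R \<phi>) E \<and> E (UP_monom P \<one> 1) = \<zero>\<^bsub>P\<^esub> \<longrightarrow>
          (\<forall>f\<in>carrier P. \<exists>h\<in>carrier P. E f = UP_monom P \<one> n \<otimes>\<^bsub>P\<^esub> h)" for n
  proof (induction n)
    case 0
    show ?case
      using LND_closed[OF P.is_cring] by (metis P.l_one monom_one)
  next
    case (Suc n)
    show ?case
    proof (intro allI impI ballI)
      fix E f assume E: "LND P (UP_C_map R \<phi>) E \<and> E (UP_monom P \<one> 1) = \<zero>\<^bsub>P\<^esub>" and f: "f \<in> carrier P"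
      note step = var_killing_LND_div_var[OF \<phi> rig conjunct1[OF E] conjunct2[OF E]]
      obtain h where h: "h \<in> carrier P" "div_var (E f) = UP_monom P \<one> n \<otimes>\<^bsub>P\<^esub> h"
        using Suc step(1,2) f by blast
      have "E f = UP_monom P \<one> (1 + n) \<otimes>\<^bsub>P\<^esub> h"
        using step(3)[OF f] h monom_one_mult[of 1 n] by (simp add: P.m_assoc)
      thus "\<exists>h\<in>carrier P. E f = UP_monom P \<one> (Suc n) \<otimes>\<^bsub>P\<^esub> h" using h by auto
    qed
  qed
  moreover have "E f \<in> carrier P" by (rule LND_closed[OF P.is_cring lnd f])
  ultimately show ?thesis using divisible_by_all_var_powers lnd EX f by blast
qed

end

text \<open>The map induced on \<open>R/I\<close> by a map \<open>f\<close> on \<open>R\<close> (meaningful when \<open>f\<close> is constant on cosets).\<close>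
definition quot_lift :: "('a, 'b) ring_scheme \<Rightarrow> 'a set \<Rightarrow> ('a \<Rightarrow> 'c) \<Rightarrow> 'a set \<Rightarrow> 'c" where
  "quot_lift R I f C = f (SOME p. p \<in> carrier R \<and> C = I +>\<^bsub>R\<^esub> p)"

context ideal
begin

lemma quot_carrier: "carrier (R Quot I) = {I +> p | p. p \<in> carrier R}"
  unfolding FactRing_def A_RCOSETS_def RCOSETS_def a_r_coset_def by auto

lemma quot_cases:
  "C \<in> carrier (R Quot I) \<Longrightarrow> (\<And>p. p \<in> carrier R \<Longrightarrow> C = I +> p \<Longrightarrow> thesis) \<Longrightarrow> thesis"
  using quot_carrier by auto

lemma coset_in_quot: "p \<in> carrier R \<Longrightarrow> I +> p \<in> carrier (R Quot I)"
  using quot_carrier by auto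

lemma quot_add: "p \<in> carrier R \<Longrightarrow> q \<in> carrier R \<Longrightarrow> (I +> p) \<oplus>\<^bsub>R Quot I\<^esub> (I +> q) = I +> (p \<oplus> q)"
  using ring_hom_add[OF rcos_ring_hom] by simp

lemma quot_mult: "p \<in> carrier R \<Longrightarrow> q \<in> carrier R \<Longrightarrow> (I +> p) \<otimes>\<^bsub>R Quot I\<^esub> (I +> q) = I +> (p \<otimes> q)"
  using ring_hom_mult[OF rcos_ring_hom] by simp

lemma coset_zero_iff: "p \<in> carrier R \<Longrightarrow> I +> p = \<zero>\<^bsub>R Quot I\<^esub> \<longleftrightarrow> p \<in> I"
  using rcos_const_imp_mem a_rcos_zero[OF is_ideal] by (auto simp: FactRing_def)

lemma coset_eq_iff:
  assumes p: "p \<in> carrier R" and q: "q \<in> carrier R"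
  shows "I +> p = I +> q \<longleftrightarrow> p \<ominus> q \<in> I"
proof -
  interpret h: ring_hom_ring R "R Quot I" "(+>) I" by (rule rcos_ring_hom_ring)
  have "I +> (p \<ominus> q) = (I +> p) \<ominus>\<^bsub>R Quot I\<^esub> (I +> q)" using p q by (simp add: a_minus_def)
  hence "I +> p = I +> q \<longleftrightarrow> I +> (p \<ominus> q) = \<zero>\<^bsub>R Quot I\<^esub>"
    using p q ring.r_right_minus_eq[OF quotient_is_ring, of "I +> p" "I +> q"]
      coset_in_quot[of p] coset_in_quot[of q] by simp
  thus ?thesis using coset_zero_iff p q by simp
qed

lemma quot_lift_coset:
  assumes wd: "\<And>p q. p \<in> carrier R \<Longrightarrow> q \<in> carrier R \<Longrightarrow> p \<ominus> q \<in> I \<Longrightarrow> f p = f q"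
    and p: "p \<in> carrier R"
  shows "quot_lift R I f (I +> p) = f p"
proof -
  define p' where "p' = (SOME p'. p' \<in> carrier R \<and> I +> p = I +> p')"
  have "p' \<in> carrier R \<and> I +> p = I +> p'" unfolding p'_def by (rule someI[of _ p]) (use p in simp)
  hence "f p' = f p" using wd[of p' p] coset_eq_iff[of p' p] p by auto
  thus ?thesis unfolding quot_lift_def p'_def by simp
qed

lemma quot_lift_hom:
  assumes h: "h \<in> ring_hom R S" and cr: "cring R" "cring S" and hI: "\<And>p. p \<in> I \<Longrightarrow> h p = \<zero>\<^bsub>S\<^esub>"
  shows "quot_lift R I h \<in> ring_hom (R Quot I) S"
    and "\<And>p. p \<in> carrier R \<Longrightarrow> quot_lift R I h (I +> p) = h p"
proof -
  interpret H: ring_hom_cring R S h by (rule ring_hom_cringI[OF cr h])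
  show cos: "quot_lift R I h (I +> p) = h p" if "p \<in> carrier R" for p
  proof (rule quot_lift_coset[OF _ that])
    fix p q assume "p \<in> carrier R" "q \<in> carrier R" "p \<ominus> q \<in> I"
    thus "h p = h q" using hI[of "p \<ominus> q"] H.hom_sub by (simp add: H.S.r_right_minus_eq)
  qed
  show "quot_lift R I h \<in> ring_hom (R Quot I) S"
  proof (rule ring_hom_memI)
    fix x y assume x: "x \<in> carrier (R Quot I)" and y: "y \<in> carrier (R Quot I)"
    obtain p where p: "p \<in> carrier R" "x = I +> p" using quot_cases[OF x] by blast
    obtain q where q: "q \<in> carrier R" "y = I +> q" using quot_cases[OF y] by blast
    show "quot_lift R I h x \<in> carrier S" using p cos by simp
    show "quot_lift R I h (x \<otimes>\<^bsub>R Quot I\<^esub> y) = quot_lift R I h x \<otimes>\<^bsub>S\<^esub> quot_lift R I h y"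
      using p q cos quot_mult by simp
    show "quot_lift R I h (x \<oplus>\<^bsub>R Quot I\<^esub> y) = quot_lift R I h x \<oplus>\<^bsub>S\<^esub> quot_lift R I h y"
      using p q cos quot_add by simp
  next
    show "quot_lift R I h \<one>\<^bsub>R Quot I\<^esub> = \<one>\<^bsub>S\<^esub>" using cos[of \<one>] by (simp add: FactRing_def)
  qed
qed

end

lemma (in ideal) quot_LND:
  assumes cr: "cring R" and \<phi>c: "\<And>c. \<phi> c \<in> carrier R"
    and lnd: "LND R \<phi> D" and DI: "\<And>p. p \<in> I \<Longrightarrow> D p \<in> I"
  shows "LND (R Quot I) (\<lambda>c. I +> \<phi> c) (quot_lift R I (\<lambda>p. I +> D p))"
    and "\<And>p. p \<in> carrier R \<Longrightarrow> quot_lift R I (\<lambda>p. I +> D p) (I +> p) = I +> D p"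
proof -
  let ?D = "quot_lift R I (\<lambda>p. I +> D p)"
  have D: "ring_derivation R D"
    and lin: "\<And>c p. p \<in> carrier R \<Longrightarrow> D (\<phi> c \<otimes> p) = \<phi> c \<otimes> D p"
    and nil: "\<And>p. p \<in> carrier R \<Longrightarrow> \<exists>n. (D ^^ n) p = \<zero>"
    using lnd LND_iff[OF cr] by auto
  interpret D: ring_derivation R D by (rule D)
  show cos: "?D (I +> p) = I +> D p" if p: "p \<in> carrier R" for p
  proof (rule quot_lift_coset[OF _ p])
    fix p q assume "p \<in> carrier R" "q \<in> carrier R" "p \<ominus> q \<in> I"
    thus "I +> D p = I +> D q" using DI[of "p \<ominus> q"] D.D_minus D.D_closed coset_eq_iff by simp
  qed
  have pow: "(?D ^^ n) (I +> p) = I +> (D ^^ n) p" if p: "p \<in> carrier R" for n p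
    by (induction n) (simp_all add: cos D.D_pow_closed[OF p])
  interpret Q: cring "R Quot I" by (rule quotient_is_cring[OF cr])
  show "LND (R Quot I) (\<lambda>c. I +> \<phi> c) ?D"
    unfolding LND_iff[OF Q.is_cring]
  proof (intro conjI allI ballI)
    show "ring_derivation (R Quot I) ?D"
    proof
      fix x y assume x: "x \<in> carrier (R Quot I)" and y: "y \<in> carrier (R Quot I)"
      obtain p where p: "p \<in> carrier R" "x = I +> p" using quot_cases[OF x] by blast
      obtain q where q: "q \<in> carrier R" "y = I +> q" using quot_cases[OF y] by blast
      show "?D x \<in> carrier (R Quot I)" using p cos coset_in_quot D.D_closed by simp
      show "?D (x \<oplus>\<^bsub>R Quot I\<^esub> y) = ?D x \<oplus>\<^bsub>R Quot I\<^esub> ?D y"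
        using p q quot_add cos D.D_add D.D_closed by simp
      show "?D (x \<otimes>\<^bsub>R Quot I\<^esub> y) = x \<otimes>\<^bsub>R Quot I\<^esub> ?D y \<oplus>\<^bsub>R Quot I\<^esub> ?D x \<otimes>\<^bsub>R Quot I\<^esub> y"
        using p q quot_add quot_mult cos D.D_mult D.D_closed by simp
    qed
  next
    fix c x assume x: "x \<in> carrier (R Quot I)"
    obtain p where p: "p \<in> carrier R" "x = I +> p" using quot_cases[OF x] by blast
    show "?D ((I +> \<phi> c) \<otimes>\<^bsub>R Quot I\<^esub> x) = (I +> \<phi> c) \<otimes>\<^bsub>R Quot I\<^esub> ?D x"
      using p \<phi>c quot_mult cos lin D.D_closed by simp
  next
    fix x assume x: "x \<in> carrier (R Quot I)"
    obtain p where p: "p \<in> carrier R" "x = I +> p" using quot_cases[OF x] by blast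
    obtain n where "(D ^^ n) p = \<zero>" using nil p by blast
    hence "(?D ^^ n) x = \<zero>\<^bsub>R Quot I\<^esub>" using pow p coset_zero_iff by simp
    thus "\<exists>n. (?D ^^ n) x = \<zero>\<^bsub>R Quot I\<^esub>" ..
  qed
qed

section \<open>Descending a derivation along a surjective homomorphism\<close>

locale derivation_descent = ring_derivation B D + S: cring S
  for B :: "('b, 'c) ring_scheme" (structure) and D and S :: "('s, 't) ring_scheme" +
  fixes \<pi> s
  assumes hom: "\<pi> \<in> ring_hom B S"
    and section_closed: "\<And>f. f \<in> carrier S \<Longrightarrow> s f \<in> carrier B"
    and right_inverse: "\<And>f. f \<in> carrier S \<Longrightarrow> \<pi> (s f) = f"
    and kernel_stable: "\<And>b. b \<in> carrier B \<Longrightarrow> \<pi> b = \<zero>\<^bsub>S\<^esub> \<Longrightarrow> \<pi> (D b) = \<zero>\<^bsub>S\<^esub>"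
begin

definition descended :: "'s \<Rightarrow> 's" where
  "descended f = \<pi> (D (s f))"

lemma hom_cring: "ring_hom_cring B S \<pi>"
  by (rule ring_hom_cringI[OF is_cring S.is_cring hom])

lemma descended_commutes:
  assumes b: "b \<in> carrier B"
  shows "\<pi> (D b) = descended (\<pi> b)"
proof -
  interpret H: ring_hom_cring B S \<pi> by (rule hom_cring)
  let ?b' = "s (\<pi> b)"
  have b': "?b' \<in> carrier B" using section_closed b by simp
  have "\<pi> (b \<ominus> ?b') = \<zero>\<^bsub>S\<^esub>" using b b' right_inverse[of "\<pi> b"] by simp
  hence "\<pi> (D (b \<ominus> ?b')) = \<zero>\<^bsub>S\<^esub>" using kernel_stable b b' by simp
  hence "\<pi> (D b) \<ominus>\<^bsub>S\<^esub> \<pi> (D ?b') = \<zero>\<^bsub>S\<^esub>" using b b' D_minus D_closed by simp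
  thus ?thesis using b b' D_closed by (simp add: S.r_right_minus_eq descended_def)
qed

lemma descended_derivation: "ring_derivation S descended"
proof -
  interpret H: ring_hom_cring B S \<pi> by (rule hom_cring)
  show ?thesis
  proof
    fix f g assume f: "f \<in> carrier S" and g: "g \<in> carrier S"
    note sc = section_closed[OF f] section_closed[OF g]
    show "descended f \<in> carrier S" using sc D_closed by (simp add: descended_def)
    have "descended (f \<oplus>\<^bsub>S\<^esub> g) = \<pi> (D (s f \<oplus> s g))"
      using descended_commutes[of "s f \<oplus> s g"] f g sc right_inverse by simp
    thus "descended (f \<oplus>\<^bsub>S\<^esub> g) = descended f \<oplus>\<^bsub>S\<^esub> descended g"
      using sc D_add D_closed by (simp add: descended_def)
    have "descended (f \<otimes>\<^bsub>S\<^esub> g) = \<pi> (D (s f \<otimes> s g))"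
      using descended_commutes[of "s f \<otimes> s g"] f g sc right_inverse by simp
    thus "descended (f \<otimes>\<^bsub>S\<^esub> g) = f \<otimes>\<^bsub>S\<^esub> descended g \<oplus>\<^bsub>S\<^esub> descended f \<otimes>\<^bsub>S\<^esub> g"
      using f g sc right_inverse D_mult D_closed by (simp add: descended_def)
  qed
qed

lemma descended_LND:
  assumes lnd: "LND B \<chi> D" and \<chi>c: "\<And>c. \<chi> c \<in> carrier B"
  shows "LND S (\<lambda>c. \<pi> (\<chi> c)) descended"
proof -
  interpret H: ring_hom_cring B S \<pi> by (rule hom_cring)
  have lin: "\<And>c b. b \<in> carrier B \<Longrightarrow> D (\<chi> c \<otimes> b) = \<chi> c \<otimes> D b"
    and nil: "\<And>b. b \<in> carrier B \<Longrightarrow> \<exists>n. (D ^^ n) b = \<zero>"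
    using lnd LND_iff[OF is_cring] by auto
  have pow: "(descended ^^ n) (\<pi> b) = \<pi> ((D ^^ n) b)" if b: "b \<in> carrier B" for n b
    by (induction n) (simp_all add: descended_commutes D_pow_closed[OF b])
  show ?thesis
    unfolding LND_iff[OF S.is_cring]
  proof (intro conjI allI ballI)
    show "ring_derivation S descended" by (rule descended_derivation)
  next
    fix c f assume f: "f \<in> carrier S"
    note sc = section_closed[OF f]
    have "descended (\<pi> (\<chi> c) \<otimes>\<^bsub>S\<^esub> f) = \<pi> (D (\<chi> c \<otimes> s f))"
      using descended_commutes[of "\<chi> c \<otimes> s f"] f sc \<chi>c right_inverse by simp
    thus "descended (\<pi> (\<chi> c) \<otimes>\<^bsub>S\<^esub> f) = \<pi> (\<chi> c) \<otimes>\<^bsub>S\<^esub> descended f"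
      using sc \<chi>c lin D_closed by (simp add: descended_def)
  next
    fix f assume f: "f \<in> carrier S"
    obtain n where "(D ^^ n) (s f) = \<zero>" using nil section_closed[OF f] by blast
    hence "(descended ^^ n) f = \<zero>\<^bsub>S\<^esub>" using pow[of "s f" n] section_closed[OF f] right_inverse[OF f] by simp
    thus "\<exists>n. (descended ^^ n) f = \<zero>\<^bsub>S\<^esub>" ..
  qed
qed

end

section \<open>Rigidity of \<open>R\<close> forces derivatives into a projection kernel\<close>

context UP_domain
begin

text \<open>If \<open>w u = 0\<close> in \<open>B\<close>, \<open>\<pi> u = 0\<close> and \<open>\<pi> w = T\<close>, then \<open>0 = \<pi> (D (w u)) = T \<cdot> \<pi> (D u)\<close>
  forces \<open>\<pi> (D u) = 0\<close>, since \<open>T\<close> is a nonzerodivisor.\<close>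
lemma derivative_of_annihilated:
  assumes cB: "cring B" and D: "ring_derivation B D" and \<pi>: "\<pi> \<in> ring_hom B P"
    and u: "u \<in> carrier B" and w: "w \<in> carrier B" and wu: "w \<otimes>\<^bsub>B\<^esub> u = \<zero>\<^bsub>B\<^esub>"
    and \<pi>u: "\<pi> u = \<zero>\<^bsub>P\<^esub>" and \<pi>w: "\<pi> w = UP_monom P \<one> 1"
  shows "\<pi> (D u) = \<zero>\<^bsub>P\<^esub>"
proof -
  interpret D: ring_derivation B D by (rule D)
  interpret H: ring_hom_cring B P \<pi> by (rule ring_hom_cringI[OF cB P.is_cring \<pi>])
  have "\<zero>\<^bsub>P\<^esub> = \<pi> (D (w \<otimes>\<^bsub>B\<^esub> u))" using wu by simp
  also have "\<dots> = \<pi> w \<otimes>\<^bsub>P\<^esub> \<pi> (D u) \<oplus>\<^bsub>P\<^esub> \<pi> (D w) \<otimes>\<^bsub>P\<^esub> \<pi> u"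
    using D.D_mult[OF w u] D.D_closed[OF u] D.D_closed[OF w] u w by simp
  also have "\<dots> = UP_monom P \<one> 1 \<otimes>\<^bsub>P\<^esub> \<pi> (D u)"
    using \<pi>u \<pi>w H.hom_closed[OF D.D_closed[OF u]] H.hom_closed[OF D.D_closed[OF w]] by simp
  finally show ?thesis
    using monom_one_mult_zero[OF H.hom_closed[OF D.D_closed[OF u]]] by simp
qed

text \<open>Suppose \<open>B\<close> has two projections \<open>\<pi>, \<pi>'\<close> onto \<open>R[T]\<close>
  and elements \<open>u, w\<close> with \<open>w u = 0\<close>, such that \<open>ker \<pi> = u B\<close>, \<open>ker \<pi>' = w B\<close>, \<open>\<pi> u = 0\<close>,
  \<open>\<pi> w = T\<close>, \<open>\<pi>' w = 0\<close>, \<open>\<pi>' u = T\<close> (think of \<open>B = R[X,Y]/(XY)\<close>, \<open>u = Y\<close>, \<open>w = X\<close>).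
  Then every LND \<open>D\<close> of \<open>B\<close> preserves \<open>ker \<pi>\<close> and descends to an LND \<open>E\<close> of \<open>R[T]\<close>;
  moreover \<open>D w \<in> w B\<close>, so \<open>T\<close> divides \<open>E T\<close>, whence \<open>E T = 0\<close>.  If \<open>R\<close> is rigid, \<open>E = 0\<close>,
  i.e. \<open>\<pi> \<circ> D = 0\<close>.\<close>
lemma rigid_imp_projected_derivative_zero:
  fixes B :: "('c, 'd) ring_scheme" and \<chi> :: "complex \<Rightarrow> 'c"
  assumes \<phi>: "\<phi> \<in> ring_hom complex_ring R" and rig: "rigid R \<phi>"
    and cB: "cring B" and lnd: "LND B \<chi> D" and \<chi>c: "\<And>c. \<chi> c \<in> carrier B"
    and \<pi>: "\<pi> \<in> ring_hom B P" and \<pi>': "\<pi>' \<in> ring_hom B P"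
    and sc: "\<And>f. f \<in> carrier P \<Longrightarrow> s f \<in> carrier B" and \<pi>s: "\<And>f. f \<in> carrier P \<Longrightarrow> \<pi> (s f) = f"
    and u: "u \<in> carrier B" and w: "w \<in> carrier B" and wu: "w \<otimes>\<^bsub>B\<^esub> u = \<zero>\<^bsub>B\<^esub>"
    and \<pi>u: "\<pi> u = \<zero>\<^bsub>P\<^esub>" and \<pi>w: "\<pi> w = UP_monom P \<one> 1"
    and \<pi>'w: "\<pi>' w = \<zero>\<^bsub>P\<^esub>" and \<pi>'u: "\<pi>' u = UP_monom P \<one> 1"
    and ker: "\<And>b. b \<in> carrier B \<Longrightarrow> \<pi> b = \<zero>\<^bsub>P\<^esub> \<Longrightarrow> \<exists>c\<in>carrier B. b = u \<otimes>\<^bsub>B\<^esub> c"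
    and ker': "\<And>b. b \<in> carrier B \<Longrightarrow> \<pi>' b = \<zero>\<^bsub>P\<^esub> \<Longrightarrow> \<exists>c\<in>carrier B. b = w \<otimes>\<^bsub>B\<^esub> c"
    and \<pi>\<chi>: "\<And>c. \<pi> (\<chi> c) = UP_C_map R \<phi> c"
    and b: "b \<in> carrier B"
  shows "\<pi> (D b) = \<zero>\<^bsub>P\<^esub>"
proof -
  interpret B: cring B by (rule cB)
  have D: "ring_derivation B D" using lnd LND_iff[OF cB] by blast
  interpret D: ring_derivation B D by (rule D)
  interpret H: ring_hom_cring B P \<pi> by (rule ring_hom_cringI[OF cB P.is_cring \<pi>])
  let ?X = "UP_monom P \<one> 1"
  have \<pi>Du: "\<pi> (D u) = \<zero>\<^bsub>P\<^esub>" by (rule derivative_of_annihilated[OF cB D \<pi> u w wu \<pi>u \<pi>w])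
  have "\<pi>' (D w) = \<zero>\<^bsub>P\<^esub>"
    by (rule derivative_of_annihilated[OF cB D \<pi>' w u _ \<pi>'w \<pi>'u]) (use wu B.m_comm[OF u w] in simp)
  then obtain cw where cw: "cw \<in> carrier B" "D w = w \<otimes>\<^bsub>B\<^esub> cw" using ker' D.D_closed[OF w] by blast
  interpret E: derivation_descent B D P \<pi> s
  proof
    fix b assume b: "b \<in> carrier B" "\<pi> b = \<zero>\<^bsub>P\<^esub>"
    then obtain c where c: "c \<in> carrier B" "b = u \<otimes>\<^bsub>B\<^esub> c" using ker by blast
    thus "\<pi> (D b) = \<zero>\<^bsub>P\<^esub>" using u D.D_mult D.D_closed \<pi>u \<pi>Du by simp
  qed (simp_all add: \<pi> sc \<pi>s)
  have lndE: "LND P (UP_C_map R \<phi>) E.descended"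
    using E.descended_LND[OF lnd \<chi>c] \<pi>\<chi> by simp
  have "E.descended ?X = \<pi> (D w)" using E.descended_commutes[OF w] \<pi>w by simp
  also have "\<dots> = ?X \<otimes>\<^bsub>P\<^esub> \<pi> cw" using cw w \<pi>w by simp
  finally have EX: "E.descended ?X = ?X \<otimes>\<^bsub>P\<^esub> \<pi> cw" .
  interpret lnd_char0_domain P E.descended
  proof (intro lnd_char0_domain.intro lnd_char0_domain_axioms.intro E.descended_derivation domain_P)
    fix k :: nat and a assume "0 < k" "a \<in> carrier P" "a \<noteq> \<zero>\<^bsub>P\<^esub>"
    thus "add_pow P k a \<noteq> \<zero>\<^bsub>P\<^esub>" by (rule domain.C_algebra_char0[OF domain_P UP_C_map_hom[OF \<phi>]])
  qed (use lndE in \<open>unfold LND_def, blast\<close>)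
  have "E.descended ?X = \<zero>\<^bsub>P\<^esub>"
    by (rule divides_derivative_imp_zero[OF _ H.hom_closed[OF cw(1)] EX]) simp
  hence "E.descended (\<pi> b) = \<zero>\<^bsub>P\<^esub>"
    by (rule rigid_imp_var_killing_LND_zero[OF \<phi> rig lndE _ H.hom_closed[OF b]])
  thus ?thesis using E.descended_commutes[OF b] by simp
qed

end

locale XY_ring =
  fixes R :: "('a, 'b) ring_scheme" (structure)
  assumes domain_R: "domain R"

sublocale XY_ring \<subseteq> P1: UP_domain R "UP R"
  by (simp add: UP_domain_def domain_R)

sublocale XY_ring \<subseteq> P2: UP_domain "UP R" "UP (UP R)"
  by (simp add: UP_domain_def P1.domain_P)

context XY_ring
begin

abbreviation "P1 \<equiv> UP R"
abbreviation "P2 \<equiv> UP (UP R)"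

lemma varX_closed: "varX R \<in> carrier P2" by (simp add: varX_def)
lemma varY_closed: "varY R \<in> carrier P2" by (simp add: varY_def)
lemma constXY_closed: "a \<in> carrier R \<Longrightarrow> constXY R a \<in> carrier P2" by (simp add: constXY_def)

lemma constXY_eq: "constXY R (\<phi> c) = UP_C_map P1 (UP_C_map R \<phi>) c"
  by (simp add: constXY_def UP_C_map_def)

text \<open>The two projections \<open>R[X,Y] \<rightarrow> R[T]\<close>: setting \<open>Y = 0\<close> (\<open>X \<mapsto> T\<close>), and setting
  \<open>X = 0\<close> (\<open>Y \<mapsto> T\<close>).\<close>
definition kill_Y :: "(nat \<Rightarrow> nat \<Rightarrow> 'a) \<Rightarrow> nat \<Rightarrow> 'a" where
  "kill_Y p = UP_coeff P2 p 0"

definition kill_X :: "(nat \<Rightarrow> nat \<Rightarrow> 'a) \<Rightarrow> nat \<Rightarrow> 'a" where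
  "kill_X p = (\<lambda>i. UP_coeff P1 (UP_coeff P2 p i) 0)"

lemma kill_Y_hom: "kill_Y \<in> ring_hom P2 P1"
  unfolding kill_Y_def by (rule P2.const_term_hom)

lemma kill_X_closed:
  assumes p: "p \<in> carrier P2"
  shows "kill_X p \<in> carrier P1"
proof (rule UP_carrier_by_bound[where k = 0, OF p])
  show "kill_X p n \<in> carrier R" for n
    using P1.coeff_closed[OF P2.coeff_closed[OF p]] by (simp add: kill_X_def)
  show "kill_X p n = \<zero>" if "p (n + 0) = \<zero>\<^bsub>P1\<^esub>" for n
    using that p by (simp add: kill_X_def P2.coeff_P_apply)
qed

lemma coeff_kill_X: "p \<in> carrier P2 \<Longrightarrow> UP_coeff P1 (kill_X p) i = UP_coeff P1 (UP_coeff P2 p i) 0"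
  using kill_X_closed by (simp add: P1.coeff_P_apply kill_X_def)

text \<open>\<open>kill_X\<close> applies the homomorphism ``constant term in \<open>X\<close>'' to each \<open>Y\<close>-coefficient.\<close>
lemma kill_X_hom: "kill_X \<in> ring_hom P2 P1"
proof (rule ring_hom_memI)
  interpret E0: ring_hom_cring P1 R "\<lambda>f. UP_coeff P1 f 0"
    by (rule ring_hom_cringI[OF P1.UP_cring P1.R.is_cring P1.const_term_hom])
  fix p q assume p: "p \<in> carrier P2" and q: "q \<in> carrier P2"
  show "kill_X p \<in> carrier P1" by (rule kill_X_closed[OF p])
  show "kill_X (p \<otimes>\<^bsub>P2\<^esub> q) = kill_X p \<otimes>\<^bsub>P1\<^esub> kill_X q"
  proof (rule P1.up_eqI)
    fix n
    have "UP_coeff P1 (kill_X (p \<otimes>\<^bsub>P2\<^esub> q)) n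
        = UP_coeff P1 (\<Oplus>\<^bsub>P1\<^esub>i\<in>{..n}. UP_coeff P2 p i \<otimes>\<^bsub>P1\<^esub> UP_coeff P2 q (n - i)) 0"
      using p q by (simp add: coeff_kill_X del: P1.coeff_mult)
    also have "\<dots> = (\<Oplus>i\<in>{..n}. UP_coeff P1 (UP_coeff P2 p i \<otimes>\<^bsub>P1\<^esub> UP_coeff P2 q (n - i)) 0)"
      using E0.hom_finsum[of "\<lambda>i. UP_coeff P2 p i \<otimes>\<^bsub>P1\<^esub> UP_coeff P2 q (n - i)" "{..n}"] p q
      by (simp add: comp_def del: P1.coeff_mult)
    also have "\<dots> = (\<Oplus>i\<in>{..n}. UP_coeff P1 (kill_X p) i \<otimes> UP_coeff P1 (kill_X q) (n - i))"
      using p q by (intro P1.R.finsum_cong) (auto simp: coeff_kill_X P1.coeff_mult_0)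
    also have "\<dots> = UP_coeff P1 (kill_X p \<otimes>\<^bsub>P1\<^esub> kill_X q) n" using kill_X_closed p q by simp
    finally show "UP_coeff P1 (kill_X (p \<otimes>\<^bsub>P2\<^esub> q)) n = UP_coeff P1 (kill_X p \<otimes>\<^bsub>P1\<^esub> kill_X q) n" .
  qed (use p q kill_X_closed in auto)
  show "kill_X (p \<oplus>\<^bsub>P2\<^esub> q) = kill_X p \<oplus>\<^bsub>P1\<^esub> kill_X q"
    by (rule P1.up_eqI) (use p q kill_X_closed in \<open>auto simp: coeff_kill_X\<close>)
next
  show "kill_X \<one>\<^bsub>P2\<^esub> = \<one>\<^bsub>P1\<^esub>"
    by (rule P1.up_eqI) (auto simp: coeff_kill_X kill_X_closed)
qed

lemma kill_Y_values:
  "kill_Y (varX R) = UP_monom P1 \<one> 1" "kill_Y (varY R) = \<zero>\<^bsub>P1\<^esub>"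
  "a \<in> carrier R \<Longrightarrow> kill_Y (constXY R a) = UP_monom P1 a 0"
  by (simp_all add: kill_Y_def varX_def varY_def constXY_def)

lemma kill_X_values:
  "kill_X (varX R) = \<zero>\<^bsub>P1\<^esub>" "kill_X (varY R) = UP_monom P1 \<one> 1"
  "a \<in> carrier R \<Longrightarrow> kill_X (constXY R a) = UP_monom P1 a 0"
  by (rule P1.up_eqI; auto simp: coeff_kill_X varX_def varY_def constXY_def kill_X_closed)+

lemma XY_ideal_eq: "XY_ideal R = PIdl\<^bsub>P2\<^esub> (varX R \<otimes>\<^bsub>P2\<^esub> varY R)"
  unfolding XY_ideal_def polyXY_def
  using P2.cgenideal_eq_genideal[of "varX R \<otimes>\<^bsub>P2\<^esub> varY R"] varX_closed varY_closed by simp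

lemma XY_ideal_is_ideal: "ideal (XY_ideal R) P2"
  unfolding XY_ideal_eq using P2.cgenideal_ideal varX_closed varY_closed by simp

lemma XY_ideal_mem: "p \<in> XY_ideal R \<longleftrightarrow> (\<exists>x\<in>carrier P2. p = x \<otimes>\<^bsub>P2\<^esub> (varX R \<otimes>\<^bsub>P2\<^esub> varY R))"
  unfolding XY_ideal_eq cgenideal_def by auto

lemma kill_Y_XY_ideal: "p \<in> XY_ideal R \<Longrightarrow> kill_Y p = \<zero>\<^bsub>P1\<^esub>"
  using XY_ideal_mem[of p] varX_closed varY_closed ring_hom_mult[OF kill_Y_hom]
    ring_hom_closed[OF kill_Y_hom] kill_Y_values by auto

lemma kill_X_XY_ideal: "p \<in> XY_ideal R \<Longrightarrow> kill_X p = \<zero>\<^bsub>P1\<^esub>"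
  using XY_ideal_mem[of p] varX_closed varY_closed ring_hom_mult[OF kill_X_hom]
    ring_hom_closed[OF kill_X_hom] kill_X_values by auto

lemma kill_Y_kernel:
  "p \<in> carrier P2 \<Longrightarrow> kill_Y p = \<zero>\<^bsub>P1\<^esub> \<Longrightarrow> p = varY R \<otimes>\<^bsub>P2\<^esub> P2.div_var p"
  unfolding kill_Y_def varY_def by (rule P2.div_var_eq)

lemma kill_X_kernel:
  assumes p: "p \<in> carrier P2" and p0: "kill_X p = \<zero>\<^bsub>P1\<^esub>"
  shows "\<exists>q\<in>carrier P2. p = varX R \<otimes>\<^bsub>P2\<^esub> q"
proof -
  define q where "q = (\<lambda>i. P1.div_var (UP_coeff P2 p i))"
  have const0: "UP_coeff P1 (UP_coeff P2 p i) 0 = \<zero>" for i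
    using coeff_kill_X[OF p, of i] p0 by simp
  have div0: "P1.div_var \<zero>\<^bsub>P1\<^esub> = \<zero>\<^bsub>P1\<^esub>"
    by (rule P1.up_eqI) (simp_all add: P1.coeff_div_var P1.div_var_closed)
  have q: "q \<in> carrier P2"
  proof (rule UP_carrier_by_bound[where k = 0, OF p])
    show "q n \<in> carrier P1" for n using P1.div_var_closed[OF P2.coeff_closed[OF p]] by (simp add: q_def)
    show "q n = \<zero>\<^bsub>P1\<^esub>" if "p (n + 0) = \<zero>\<^bsub>P1\<^esub>" for n
      using that p div0 by (simp add: q_def P2.coeff_P_apply)
  qed
  have "varX R \<otimes>\<^bsub>P2\<^esub> q = UP_monom P1 \<one> 1 \<odot>\<^bsub>P2\<^esub> q"
    unfolding varX_def using P2.monom_mult_is_smult[of "UP_monom P1 \<one> 1" q] q by simp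
  also have "\<dots> = p"
  proof (rule P2.up_eqI)
    fix i
    have "UP_coeff P2 q i = P1.div_var (UP_coeff P2 p i)" using q by (simp add: P2.coeff_P_apply q_def)
    thus "UP_coeff P2 (UP_monom P1 \<one> 1 \<odot>\<^bsub>P2\<^esub> q) i = UP_coeff P2 p i"
      using q P1.div_var_eq[OF P2.coeff_closed[OF p] const0[of i], symmetric] by simp
  qed (use p q in auto)
  finally show ?thesis using q by auto
qed

text \<open>An element of both kernels lies in \<open>(XY)\<close>: \<open>p = Y p'\<close>, and \<open>X\<close> divides \<open>p'\<close>.\<close>
lemma kernels_inter:
  assumes p: "p \<in> carrier P2" and "kill_Y p = \<zero>\<^bsub>P1\<^esub>" and "kill_X p = \<zero>\<^bsub>P1\<^esub>"
  shows "p \<in> XY_ideal R"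
proof -
  let ?p' = "P2.div_var p"
  have p': "?p' \<in> carrier P2" using P2.div_var_closed p by simp
  have pe: "p = varY R \<otimes>\<^bsub>P2\<^esub> ?p'" using kill_Y_kernel p assms by simp
  have "kill_X (varY R \<otimes>\<^bsub>P2\<^esub> ?p') = \<zero>\<^bsub>P1\<^esub>" using assms(3) pe by metis
  hence "UP_monom P1 \<one> 1 \<otimes>\<^bsub>P1\<^esub> kill_X ?p' = \<zero>\<^bsub>P1\<^esub>"
    using ring_hom_mult[OF kill_X_hom varY_closed p'] kill_X_values(2) by simp
  hence "kill_X ?p' = \<zero>\<^bsub>P1\<^esub>" using P1.monom_one_mult_zero kill_X_closed p' by blast
  then obtain q where q: "q \<in> carrier P2" "?p' = varX R \<otimes>\<^bsub>P2\<^esub> q" using kill_X_kernel p' by blast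
  have "p = varY R \<otimes>\<^bsub>P2\<^esub> (varX R \<otimes>\<^bsub>P2\<^esub> q)" by (rule trans[OF pe]) (simp add: q(2))
  also have "\<dots> = q \<otimes>\<^bsub>P2\<^esub> (varX R \<otimes>\<^bsub>P2\<^esub> varY R)"
    using q varX_closed varY_closed by (simp add: P2.m_ac)
  finally have "p = q \<otimes>\<^bsub>P2\<^esub> (varX R \<otimes>\<^bsub>P2\<^esub> varY R)" .
  thus ?thesis using XY_ideal_mem q by blast
qed

definition embed_X :: "(nat \<Rightarrow> 'a) \<Rightarrow> nat \<Rightarrow> nat \<Rightarrow> 'a" where
  "embed_X f = UP_monom P2 f 0"

definition embed_Y :: "(nat \<Rightarrow> 'a) \<Rightarrow> nat \<Rightarrow> nat \<Rightarrow> 'a" where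
  "embed_Y f = (\<lambda>i. UP_monom P1 (f i) 0)"

lemma embed_X_closed: "f \<in> carrier P1 \<Longrightarrow> embed_X f \<in> carrier P2"
  by (simp add: embed_X_def)

lemma kill_Y_embed_X: "f \<in> carrier P1 \<Longrightarrow> kill_Y (embed_X f) = f"
  by (simp add: embed_X_def kill_Y_def)

lemma embed_Y_closed:
  assumes f: "f \<in> carrier P1"
  shows "embed_Y f \<in> carrier P2"
proof (rule UP_carrier_by_bound[where k = 0, OF f])
  show "embed_Y f n \<in> carrier P1" for n
    using P1.coeff_closed[OF f, of n] f by (simp add: embed_Y_def P1.coeff_P_apply)
qed (simp add: embed_Y_def)

lemma kill_X_embed_Y:
  assumes f: "f \<in> carrier P1"
  shows "kill_X (embed_Y f) = f"
proof (rule P1.up_eqI)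
  fix n
  have "UP_coeff P2 (embed_Y f) n = UP_monom P1 (f n) 0"
    using embed_Y_closed[OF f] by (simp add: P2.coeff_P_apply embed_Y_def)
  moreover have "f n \<in> carrier R" using P1.coeff_closed[OF f, of n] f by (simp add: P1.coeff_P_apply)
  ultimately have "UP_coeff P1 (kill_X (embed_Y f)) n = f n"
    using coeff_kill_X[OF embed_Y_closed[OF f], of n] by simp
  thus "UP_coeff P1 (kill_X (embed_Y f)) n = UP_coeff P1 f n" using f by (simp add: P1.coeff_P_apply)
qed (use f embed_Y_closed kill_X_closed in auto)

end

sublocale XY_ring \<subseteq> I: ideal "XY_ideal R" "UP (UP R)"
  by (rule XY_ideal_is_ideal)

context XY_ring
begin

abbreviation "I \<equiv> XY_ideal R"
abbreviation "B \<equiv> XY_quot R"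

lemma XY_quot_eq: "B = P2 Quot I"
  by (simp add: XY_quot_def polyXY_def)

lemma XY_quot_hom_eq: "XY_quot_hom R \<phi> c = I +>\<^bsub>P2\<^esub> constXY R (\<phi> c)"
  by (simp add: XY_quot_hom_def polyXY_def)

lemma cring_B: "cring B"
  unfolding XY_quot_eq by (rule I.quotient_is_cring[OF P2.UP_cring])

lemma B_coset: "p \<in> carrier P2 \<Longrightarrow> I +>\<^bsub>P2\<^esub> p \<in> carrier B"
  unfolding XY_quot_eq by (rule I.coset_in_quot)

lemma B_cases: "C \<in> carrier B \<Longrightarrow> (\<And>p. p \<in> carrier P2 \<Longrightarrow> C = I +>\<^bsub>P2\<^esub> p \<Longrightarrow> thesis) \<Longrightarrow> thesis"
  unfolding XY_quot_eq by (rule I.quot_cases)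

lemma B_mult:
  "p \<in> carrier P2 \<Longrightarrow> q \<in> carrier P2 \<Longrightarrow> (I +>\<^bsub>P2\<^esub> p) \<otimes>\<^bsub>B\<^esub> (I +>\<^bsub>P2\<^esub> q) = I +>\<^bsub>P2\<^esub> (p \<otimes>\<^bsub>P2\<^esub> q)"
  unfolding XY_quot_eq by (rule I.quot_mult)

lemma B_zero_iff: "p \<in> carrier P2 \<Longrightarrow> I +>\<^bsub>P2\<^esub> p = \<zero>\<^bsub>B\<^esub> \<longleftrightarrow> p \<in> I"
  unfolding XY_quot_eq by (rule I.coset_zero_iff)

definition quot_kill_Y where "quot_kill_Y = quot_lift P2 I kill_Y"
definition quot_kill_X where "quot_kill_X = quot_lift P2 I kill_X"

lemma quot_kill_Y:
  "quot_kill_Y \<in> ring_hom B P1" "p \<in> carrier P2 \<Longrightarrow> quot_kill_Y (I +>\<^bsub>P2\<^esub> p) = kill_Y p"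
  using I.quot_lift_hom[OF kill_Y_hom P2.UP_cring P1.UP_cring kill_Y_XY_ideal]
  by (simp_all add: quot_kill_Y_def XY_quot_eq)

lemma quot_kill_X:
  "quot_kill_X \<in> ring_hom B P1" "p \<in> carrier P2 \<Longrightarrow> quot_kill_X (I +>\<^bsub>P2\<^esub> p) = kill_X p"
  using I.quot_lift_hom[OF kill_X_hom P2.UP_cring P1.UP_cring kill_X_XY_ideal]
  by (simp_all add: quot_kill_X_def XY_quot_eq)

definition class_X where "class_X = I +>\<^bsub>P2\<^esub> varX R"
definition class_Y where "class_Y = I +>\<^bsub>P2\<^esub> varY R"

lemma class_closed: "class_X \<in> carrier B" "class_Y \<in> carrier B"
  using B_coset varX_closed varY_closed by (simp_all add: class_X_def class_Y_def)

lemma class_X_mult_class_Y: "class_X \<otimes>\<^bsub>B\<^esub> class_Y = \<zero>\<^bsub>B\<^esub>" "class_Y \<otimes>\<^bsub>B\<^esub> class_X = \<zero>\<^bsub>B\<^esub>"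
proof -
  have XY: "varX R \<otimes>\<^bsub>P2\<^esub> varY R \<in> carrier P2" using varX_closed varY_closed by simp
  have "varX R \<otimes>\<^bsub>P2\<^esub> varY R \<in> I"
    unfolding XY_ideal_mem by (rule bexI[of _ "\<one>\<^bsub>P2\<^esub>"]) (use XY in simp_all)
  hence "I +>\<^bsub>P2\<^esub> (varX R \<otimes>\<^bsub>P2\<^esub> varY R) = \<zero>\<^bsub>B\<^esub>" using B_zero_iff[OF XY] by simp
  thus XY0: "class_X \<otimes>\<^bsub>B\<^esub> class_Y = \<zero>\<^bsub>B\<^esub>"
    using B_mult[OF varX_closed varY_closed] by (simp add: class_X_def class_Y_def)
  show "class_Y \<otimes>\<^bsub>B\<^esub> class_X = \<zero>\<^bsub>B\<^esub>"
    using XY0 comm_monoid.m_comm[OF cring.axioms(2)[OF cring_B] class_closed] by simp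
qed

lemma quot_kill_classes:
  "quot_kill_Y class_Y = \<zero>\<^bsub>P1\<^esub>" "quot_kill_Y class_X = UP_monom P1 \<one> 1"
  "quot_kill_X class_X = \<zero>\<^bsub>P1\<^esub>" "quot_kill_X class_Y = UP_monom P1 \<one> 1"
  using quot_kill_Y quot_kill_X varX_closed varY_closed kill_Y_values kill_X_values
  by (simp_all add: class_X_def class_Y_def)

lemma quot_kill_Y_kernel:
  assumes b: "b \<in> carrier B" and b0: "quot_kill_Y b = \<zero>\<^bsub>P1\<^esub>"
  shows "\<exists>c\<in>carrier B. b = class_Y \<otimes>\<^bsub>B\<^esub> c"
proof -
  obtain p where p: "p \<in> carrier P2" "b = I +>\<^bsub>P2\<^esub> p" using B_cases[OF b] by blast
  have "kill_Y p = \<zero>\<^bsub>P1\<^esub>" using b0 p quot_kill_Y(2) by simp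
  hence "p = varY R \<otimes>\<^bsub>P2\<^esub> P2.div_var p" by (rule kill_Y_kernel[OF p(1)])
  hence "b = I +>\<^bsub>P2\<^esub> (varY R \<otimes>\<^bsub>P2\<^esub> P2.div_var p)" unfolding p(2) by (rule arg_cong)
  also have "\<dots> = class_Y \<otimes>\<^bsub>B\<^esub> (I +>\<^bsub>P2\<^esub> P2.div_var p)"
    using B_mult varY_closed P2.div_var_closed[OF p(1)] by (simp add: class_Y_def)
  finally show ?thesis using B_coset P2.div_var_closed[OF p(1)] by blast
qed

lemma quot_kill_X_kernel:
  assumes b: "b \<in> carrier B" and b0: "quot_kill_X b = \<zero>\<^bsub>P1\<^esub>"
  shows "\<exists>c\<in>carrier B. b = class_X \<otimes>\<^bsub>B\<^esub> c"
proof -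
  obtain p where p: "p \<in> carrier P2" "b = I +>\<^bsub>P2\<^esub> p" using B_cases[OF b] by blast
  have "kill_X p = \<zero>\<^bsub>P1\<^esub>" using b0 p quot_kill_X(2) by simp
  then obtain q where q: "q \<in> carrier P2" "p = varX R \<otimes>\<^bsub>P2\<^esub> q" using kill_X_kernel[OF p(1)] by blast
  have "b = class_X \<otimes>\<^bsub>B\<^esub> (I +>\<^bsub>P2\<^esub> q)"
    unfolding p(2) q(2) class_X_def using B_mult[OF varX_closed q(1)] by simp
  thus ?thesis using B_coset q by blast
qed

lemma quot_kill_both_zero:
  assumes C: "C \<in> carrier B" and "quot_kill_Y C = \<zero>\<^bsub>P1\<^esub>" and "quot_kill_X C = \<zero>\<^bsub>P1\<^esub>"
  shows "C = \<zero>\<^bsub>B\<^esub>"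
proof -
  obtain p where p: "p \<in> carrier P2" "C = I +>\<^bsub>P2\<^esub> p" using B_cases[OF C] by blast
  hence "p \<in> I" using kernels_inter[OF p(1)] assms quot_kill_Y(2) quot_kill_X(2) by simp
  thus ?thesis using p B_zero_iff by simp
qed

lemma quot_kill_C_map:
  assumes \<phi>: "\<phi> \<in> ring_hom complex_ring R"
  shows "quot_kill_Y (XY_quot_hom R \<phi> c) = UP_C_map R \<phi> c"
    and "quot_kill_X (XY_quot_hom R \<phi> c) = UP_C_map R \<phi> c"
    and "XY_quot_hom R \<phi> c \<in> carrier B"
  using quot_kill_Y(2) quot_kill_X(2) B_coset constXY_closed kill_Y_values(3) kill_X_values(3)
    C_hom_closed[OF \<phi>] XY_quot_hom_eq
  by (simp_all add: UP_C_map_def)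

lemma quot_kill_right_inverses:
  assumes "f \<in> carrier P1"
  shows "I +>\<^bsub>P2\<^esub> embed_X f \<in> carrier B" and "quot_kill_Y (I +>\<^bsub>P2\<^esub> embed_X f) = f"
    and "I +>\<^bsub>P2\<^esub> embed_Y f \<in> carrier B" and "quot_kill_X (I +>\<^bsub>P2\<^esub> embed_Y f) = f"
  using assms B_coset embed_X_closed embed_Y_closed quot_kill_Y(2) quot_kill_X(2)
    kill_Y_embed_X kill_X_embed_Y by simp_all

section \<open>\<open>R\<close> rigid implies \<open>R[X,Y]/(XY)\<close> rigid\<close>

text \<open>Apply \<open>rigid_imp_projected_derivative_zero\<close> to both projections, with the roles of
  \<open>class_X\<close> and \<open>class_Y\<close> exchanged; then \<open>D C\<close> is killed by both projections.\<close>
lemma rigid_imp_rigid_quot: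
  assumes \<phi>: "\<phi> \<in> ring_hom complex_ring R" and rig: "rigid R \<phi>"
  shows "rigid B (XY_quot_hom R \<phi>)"
  unfolding rigid_def
proof (intro allI impI ballI)
  fix D C assume lnd: "LND B (XY_quot_hom R \<phi>) D" and C: "C \<in> carrier B"
  note rigid_proj = P1.rigid_imp_projected_derivative_zero[OF \<phi> rig cring_B lnd quot_kill_C_map(3)[OF \<phi>]]
  have "quot_kill_Y (D C) = \<zero>\<^bsub>P1\<^esub>"
    by (rule rigid_proj[OF quot_kill_Y(1) quot_kill_X(1) _ _ class_closed(2,1) class_X_mult_class_Y(1)
          quot_kill_classes quot_kill_Y_kernel quot_kill_X_kernel quot_kill_C_map(1)[OF \<phi>] C,
          where s = "\<lambda>f. I +>\<^bsub>P2\<^esub> embed_X f"])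
      (simp_all add: quot_kill_right_inverses)
  moreover have "quot_kill_X (D C) = \<zero>\<^bsub>P1\<^esub>"
    by (rule rigid_proj[OF quot_kill_X(1) quot_kill_Y(1) _ _ class_closed class_X_mult_class_Y(2)
          quot_kill_classes(3,4,1,2) quot_kill_X_kernel quot_kill_Y_kernel quot_kill_C_map(2)[OF \<phi>] C,
          where s = "\<lambda>f. I +>\<^bsub>P2\<^esub> embed_Y f"])
      (simp_all add: quot_kill_right_inverses)
  ultimately show "D C = \<zero>\<^bsub>B\<^esub>"
    by (rule quot_kill_both_zero[OF LND_closed[OF cring_B lnd C]])
qed

section \<open>\<open>R[X,Y]/(XY)\<close> rigid implies \<open>R\<close> rigid\<close>

text \<open>An LND \<open>\<delta>\<close> of \<open>R\<close>, extended coefficientwise in \<open>X\<close> and then in \<open>Y\<close>, is an LND of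
  \<open>R[X,Y]\<close> which kills \<open>X\<close> and \<open>Y\<close>, hence preserves \<open>(XY)\<close>.\<close>
lemma coeffwise_XY_LND:
  assumes \<phi>: "\<phi> \<in> ring_hom complex_ring R" and lnd: "LND R \<phi> \<delta>"
  defines "D2 \<equiv> P2.coeffwise (P1.coeffwise \<delta>)"
  shows "LND P2 (UP_C_map P1 (UP_C_map R \<phi>)) D2"
    and "\<And>a. a \<in> carrier R \<Longrightarrow> D2 (constXY R a) = constXY R (\<delta> a)"
    and "\<And>p. p \<in> I \<Longrightarrow> D2 p \<in> I"
proof -
  have \<delta>: "ring_derivation R \<delta>" using lnd LND_iff[OF P1.R.is_cring] by blast
  have D1: "ring_derivation P1 (P1.coeffwise \<delta>)" by (rule P1.coeffwise_derivation[OF \<delta>])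
  show "LND P2 (UP_C_map P1 (UP_C_map R \<phi>)) D2"
    unfolding D2_def by (rule P2.coeffwise_LND[OF P1.UP_C_map_hom[OF \<phi>] P1.coeffwise_LND[OF \<phi> lnd]])
  interpret D2: ring_derivation P2 D2 unfolding D2_def by (rule P2.coeffwise_derivation[OF D1])
  show "D2 (constXY R a) = constXY R (\<delta> a)" if "a \<in> carrier R" for a
    using that P2.coeffwise_monom[OF D1] P1.coeffwise_monom[OF \<delta>] by (simp add: D2_def constXY_def)
  have "D2 (varX R) = \<zero>\<^bsub>P2\<^esub>" and "D2 (varY R) = \<zero>\<^bsub>P2\<^esub>"
    using P2.coeffwise_monom[OF D1] P1.coeffwise_monom[OF \<delta>] ring_derivation.D_one[OF \<delta>]
      ring_derivation.D_one[OF D1] by (simp_all add: D2_def varX_def varY_def)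
  hence D2XY: "D2 (varX R \<otimes>\<^bsub>P2\<^esub> varY R) = \<zero>\<^bsub>P2\<^esub>"
    using D2.D_mult[OF varX_closed varY_closed] varX_closed varY_closed by simp
  show "D2 x \<in> I" if x: "x \<in> I" for x
  proof -
    obtain y where y: "y \<in> carrier P2" "x = y \<otimes>\<^bsub>P2\<^esub> (varX R \<otimes>\<^bsub>P2\<^esub> varY R)"
      using x XY_ideal_mem by blast
    have XY: "varX R \<otimes>\<^bsub>P2\<^esub> varY R \<in> carrier P2" using varX_closed varY_closed by simp
    have "D2 x = y \<otimes>\<^bsub>P2\<^esub> D2 (varX R \<otimes>\<^bsub>P2\<^esub> varY R) \<oplus>\<^bsub>P2\<^esub> D2 y \<otimes>\<^bsub>P2\<^esub> (varX R \<otimes>\<^bsub>P2\<^esub> varY R)"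
      unfolding y(2) by (rule D2.D_mult[OF y(1) XY])
    also have "\<dots> = D2 y \<otimes>\<^bsub>P2\<^esub> (varX R \<otimes>\<^bsub>P2\<^esub> varY R)"
      unfolding D2XY using y(1) XY D2.D_closed[OF y(1)] by simp
    finally show ?thesis using XY_ideal_mem D2.D_closed[OF y(1)] by blast
  qed
qed

text \<open>The LND of \<open>R[X,Y]\<close> above induces an LND of \<open>B\<close>, which vanishes; so \<open>\<delta> r\<close>, read as
  a constant, lies in \<open>(XY)\<close>, and setting \<open>Y = 0\<close> gives \<open>\<delta> r = 0\<close>.\<close>
lemma rigid_quot_imp_rigid:
  assumes \<phi>: "\<phi> \<in> ring_hom complex_ring R" and rigB: "rigid B (XY_quot_hom R \<phi>)"
  shows "rigid R \<phi>"
  unfolding rigid_def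
proof (intro allI impI ballI)
  fix \<delta> r assume lnd: "LND R \<phi> \<delta>" and r: "r \<in> carrier R"
  have \<delta>r: "\<delta> r \<in> carrier R" by (rule LND_closed[OF P1.R.is_cring lnd r])
  define D2 where "D2 = P2.coeffwise (P1.coeffwise \<delta>)"
  note D2 = coeffwise_XY_LND[OF \<phi> lnd, folded D2_def]
  define DB where "DB = quot_lift P2 I (\<lambda>p. I +>\<^bsub>P2\<^esub> D2 p)"
  have \<psi>c: "UP_C_map P1 (UP_C_map R \<phi>) c \<in> carrier P2" for c
    by (rule C_hom_closed[OF P2.UP_C_map_hom[OF P1.UP_C_map_hom[OF \<phi>]]])
  have lndQ: "LND (P2 Quot I) (\<lambda>c. I +>\<^bsub>P2\<^esub> UP_C_map P1 (UP_C_map R \<phi>) c) DB"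
    unfolding DB_def by (rule I.quot_LND(1)[OF P2.UP_cring \<psi>c D2(1,3)])
  have DB_coset: "DB (I +>\<^bsub>P2\<^esub> p) = I +>\<^bsub>P2\<^esub> D2 p" if "p \<in> carrier P2" for p
    unfolding DB_def by (rule I.quot_LND(2)[OF P2.UP_cring \<psi>c D2(1,3) that])
  have "XY_quot_hom R \<phi> = (\<lambda>c. I +>\<^bsub>P2\<^esub> UP_C_map P1 (UP_C_map R \<phi>) c)"
    by (simp add: fun_eq_iff XY_quot_hom_eq constXY_eq)
  hence "LND B (XY_quot_hom R \<phi>) DB" using lndQ by (simp add: XY_quot_eq)
  hence "DB (I +>\<^bsub>P2\<^esub> constXY R r) = \<zero>\<^bsub>B\<^esub>"
    using rigB B_coset[OF constXY_closed[OF r]] unfolding rigid_def by blast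
  hence "constXY R (\<delta> r) \<in> I"
    using DB_coset[OF constXY_closed[OF r]] B_zero_iff[OF constXY_closed[OF \<delta>r]] D2(2)[OF r] by simp
  hence "UP_monom P1 (\<delta> r) 0 = \<zero>\<^bsub>P1\<^esub>"
    using kill_Y_XY_ideal kill_Y_values(3)[OF \<delta>r] by simp
  hence "UP_coeff P1 (UP_monom P1 (\<delta> r) 0) 0 = \<zero>" by simp
  thus "\<delta> r = \<zero>" using \<delta>r by simp
qed

end

theorem lemma2p4:
  fixes R :: "('a, 'b) ring_scheme" and \<phi> :: "complex \<Rightarrow> 'a"
  assumes "C_algebra R \<phi>"
    and "domain R"
    and "fin_gen_C_algebra R \<phi>"
  shows "rigid R \<phi> \<longleftrightarrow> rigid (XY_quot R) (XY_quot_hom R \<phi>)"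
proof -
  interpret XY_ring R by (rule XY_ring.intro) (rule assms(2))
  have \<phi>: "\<phi> \<in> ring_hom complex_ring R" using assms(1) unfolding C_algebra_def by simp
  show ?thesis using rigid_imp_rigid_quot[OF \<phi>] rigid_quot_imp_rigid[OF \<phi>] by blast
qed

end
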